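(* (i) Let $2\beta>\alpha>-1$. Then $$I_{\beta+1}=\sum_{n=0}^\infty\binom{\alpha-\beta+n-1}{n}\ell_n^{(\alpha)}$$ with convergence in $L^1(\mathbb R_+)$. In particular, for $\alpha>2$, $I_\alpha=\sum_{n=0}^\infty\ell_n^{(\alpha)}$ in $L^1(\mathbb R_+)$. (ii) For every $a>0$, $$e_a=\sum_{n=0}^\infty\frac{(a-\frac12)^n}{(a+\frac12)^{n+1}}\mathscr L_n^{(0)}$$ with convergence in $L^1(\mathbb R_+)$, where $e_a(t)=e^{-at}$.
   Context: $I_s(t):=\frac{1}{\Gamma(s)}e^{-t}t^{s-1}$ for $t>0$, $\Re s>0$. $L_n^{(\alpha)}(t)=\sum_{k=0}^n(-1)^k\binom{n+\alpha}{n-k}\frac{t^k}{k!}$ is the generalized Laguerre polynomial, and $\ell_n^{(\alpha)}(t):=\frac{n!}{\Gamma(n+\alpha+1)}t^{\alpha}e^{-t}L_n^{(\alpha)}(t)$ for $t>0$. $\mathscr L_n^{(0)}(t):=e^{-t/2}L_n^{(0)}(t)$. For real $x$, $\binom{x}{n}=\frac{x(x-1)\cdots(x-n+1)}{n!}$ and $\binom{x}{0}=1$. *)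

theory Defs
  imports "HOL-Analysis.Analysis"
begin

definition I_fun :: "real \<Rightarrow> real \<Rightarrow> real" where
  "I_fun s t = exp (- t) * t powr (s - 1) / Gamma s"

definition laguerre :: "nat \<Rightarrow> real \<Rightarrow> real \<Rightarrow> real" where
  "laguerre n \<alpha> t = (\<Sum>k\<le>n. (-1) ^ k * ((real n + \<alpha>) gchoose (n - k)) * t ^ k / fact k)"

definition ell :: "nat \<Rightarrow> real \<Rightarrow> real \<Rightarrow> real" where
  "ell n \<alpha> t = fact n / Gamma (real n + \<alpha> + 1) * t powr \<alpha> * exp (- t) * laguerre n \<alpha> t"

definition laguerre_fun :: "nat \<Rightarrow> real \<Rightarrow> real" where
  "laguerre_fun n t = exp (- t / 2) * laguerre n 0 t"

definition L1_sums :: "(nat \<Rightarrow> real \<Rightarrow> real) \<Rightarrow> (real \<Rightarrow> real) \<Rightarrow> bool" where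
  "L1_sums f g \<longleftrightarrow>
     ((\<lambda>N. \<integral>\<^sup>+ t \<in> {0<..}. ennreal \<bar>g t - (\<Sum>n<N. f n t)\<bar> \<partial>lborel) \<longlongrightarrow> 0) sequentially"

end

theory Submission
  imports Defs
begin

(* Each series is identified through its Laplace transform on the half-line. Expanding the
  Laguerre polynomial and integrating term by term gives
    int_0^oo ell_n^(alpha)(t) e^(-st) dt = (s+1)^(-(alpha+1)) (s/(s+1))^n,
  so in (i) the transforms of the terms add up to the binomial series of
  (s+1)^(-(alpha+1)) (1 - s/(s+1))^(beta-alpha) = (s+1)^(-(beta+1)), the transform of I_(beta+1),
  and in (ii) to a geometric series with sum 1/(s+a), the transform of e_a.
  Both series converge absolutely in L^1(R_+). In (i), Cauchy-Schwarz against the orthogonality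
  weight t^alpha e^(-t) gives ||ell_n^(alpha)||_1 = O(n^(-alpha/2)), while the coefficients are
  O(n^(alpha-beta-1)); their product is summable exactly when 2 beta > alpha. In (ii), the
  Laguerre functions have L^1 norm O(n) and the coefficients decay geometrically.
  Finally, an integrable function on (0,oo) whose Laplace transform vanishes at all positive
  integers vanishes almost everywhere: in the variable u = e^(-t) its integrals against all
  polynomials vanish, hence (Weierstrass) against all continuous functions, hence against the
  indicators of all half-lines. So the L^1 sum has the right transform, and is the right
  function. *)

section \<open>Uniqueness of the Laplace transform on the half-line\<close>

lemma integrable_mult_bounded_on_pos:
  fixes D h :: "real \<Rightarrow> real"
  assumes D: "integrable lborel D" and supp: "\<And>t. t \<le> 0 \<Longrightarrow> D t = 0"
    and h: "h \<in> borel_measurable borel" and hB: "\<And>t. t > 0 \<Longrightarrow> \<bar>h t\<bar> \<le> B"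
  shows "integrable lborel (\<lambda>t. D t * h t)"
proof (rule Bochner_Integration.integrable_bound)
  show "integrable lborel (\<lambda>t. B * D t)" using D by simp
  show "(\<lambda>t. D t * h t) \<in> borel_measurable lborel" using D h by measurable
  have "norm (D t * h t) \<le> norm (B * D t)" for t
  proof (cases "t \<le> 0")
    case False
    then have "\<bar>h t\<bar> \<le> \<bar>B\<bar>" using hB[of t] by linarith
    then show ?thesis by (simp add: abs_mult mult.commute[of "\<bar>B\<bar>"] mult_left_mono)
  qed (simp add: supp)
  then show "AE t in lborel. norm (D t * h t) \<le> norm (B * D t)" by simp
qed

lemma integrable_mult_exp_on_pos:
  fixes D :: "real \<Rightarrow> real"
  assumes D: "integrable lborel D" and supp: "\<And>t. t \<le> 0 \<Longrightarrow> D t = 0" and s: "s \<ge> 0"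
  shows "integrable lborel (\<lambda>t. D t * exp (- (s * t)))"
  by (rule integrable_mult_bounded_on_pos[OF D supp, where B = 1]) (use s in auto)

lemma abs_integral_mult_le_on_pos:
  fixes D h :: "real \<Rightarrow> real"
  assumes D: "integrable lborel D" and supp: "\<And>t. t \<le> 0 \<Longrightarrow> D t = 0"
    and h: "h \<in> borel_measurable borel" and hB: "\<And>t. t > 0 \<Longrightarrow> \<bar>h t\<bar> \<le> B"
  shows "\<bar>\<integral>t. D t * h t \<partial>lborel\<bar> \<le> B * (\<integral>t. \<bar>D t\<bar> \<partial>lborel)"
proof -
  have Dh: "integrable lborel (\<lambda>t. D t * h t)"
    by (rule integrable_mult_bounded_on_pos[OF D supp h hB])
  have "\<bar>\<integral>t. D t * h t \<partial>lborel\<bar> \<le> (\<integral>t. \<bar>D t * h t\<bar> \<partial>lborel)"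
    by (rule integral_abs_bound)
  also have "\<dots> \<le> (\<integral>t. B * \<bar>D t\<bar> \<partial>lborel)"
  proof (rule Bochner_Integration.integral_mono)
    show "integrable lborel (\<lambda>t. \<bar>D t * h t\<bar>)" using Dh by simp
    show "integrable lborel (\<lambda>t. B * \<bar>D t\<bar>)" using D by simp
    show "\<bar>D t * h t\<bar> \<le> B * \<bar>D t\<bar>" for t
      using supp[of t] hB[of t]
      by (cases "t \<le> 0") (auto simp: abs_mult mult.commute[of B] mult_left_mono)
  qed
  finally show ?thesis by simp
qed

lemma integral_mult_poly_exp_eq_0:
  fixes D :: "real \<Rightarrow> real"
  assumes D: "integrable lborel D" and supp: "\<And>t. t \<le> 0 \<Longrightarrow> D t = 0"
    and mom: "\<And>k::nat. (\<integral>t. D t * exp (- (real k * t)) \<partial>lborel) = 0"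
  shows "(\<integral>t. D t * (\<Sum>i\<le>n. a i * exp (- t) ^ i) \<partial>lborel) = 0"
proof -
  have "(\<integral>t. D t * (\<Sum>i\<le>n. a i * exp (- t) ^ i) \<partial>lborel)
      = (\<integral>t. (\<Sum>i\<le>n. a i * (D t * exp (- (real i * t)))) \<partial>lborel)"
    by (simp add: exp_of_nat_mult[symmetric] sum_distrib_left mult_ac)
  also have "\<dots> = (\<Sum>i\<le>n. a i * (\<integral>t. D t * exp (- (real i * t)) \<partial>lborel))"
    by (subst Bochner_Integration.integral_sum)
       (auto intro!: integrable_mult_right integrable_mult_exp_on_pos[OF D supp])
  also have "\<dots> = 0" using mom by simp
  finally show ?thesis .
qed

lemma integral_mult_continuous_exp_eq_0:
  fixes D \<phi> :: "real \<Rightarrow> real"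
  assumes D: "integrable lborel D" and supp: "\<And>t. t \<le> 0 \<Longrightarrow> D t = 0"
    and mom: "\<And>k::nat. (\<integral>t. D t * exp (- (real k * t)) \<partial>lborel) = 0"
    and \<phi>: "continuous_on UNIV \<phi>" and \<phi>1: "\<And>u. \<bar>\<phi> u\<bar> \<le> 1"
  shows "(\<integral>t. D t * \<phi> (exp (- t)) \<partial>lborel) = 0"
proof -
  let ?I = "\<integral>t. D t * \<phi> (exp (- t)) \<partial>lborel"
  let ?N = "\<integral>t. \<bar>D t\<bar> \<partial>lborel"
  have \<phi>m: "(\<lambda>t. \<phi> (exp (- t))) \<in> borel_measurable borel"
    by (intro borel_measurable_continuous_onI continuous_on_compose2[OF \<phi>])
       (auto intro!: continuous_intros)
  have exp_01: "exp (- t) \<in> {0..1}" if "t > 0" for t :: real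
    using that by auto
  have approx: "\<bar>?I\<bar> \<le> e * ?N" if e: "e > 0" for e
  proof -
    have "continuous_on {0..1} \<phi>" using \<phi> continuous_on_subset by blast
    then obtain g where "real_polynomial_function g"
      and g: "\<And>x. x \<in> {0..1} \<Longrightarrow> \<bar>\<phi> x - g x\<bar> < e"
      using Stone_Weierstrass_real_polynomial_function[of "{0..1::real}" \<phi> e] e by auto
    then obtain a n where g_eq: "g = (\<lambda>x. \<Sum>i\<le>n. a i * x ^ i)"
      using real_polynomial_function_iff_sum by auto
    have gm: "(\<lambda>t. g (exp (- t))) \<in> borel_measurable borel"
      unfolding g_eq by measurable
    have g_bound: "\<bar>g (exp (- t))\<bar> \<le> 1 + e" if "t > 0" for t
      using g[OF exp_01[OF that]] \<phi>1[of "exp (- t)"] by linarith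
    have "integrable lborel (\<lambda>t. D t * g (exp (- t)))"
      using integrable_mult_bounded_on_pos[OF D supp gm g_bound] .
    moreover have "(\<integral>t. D t * g (exp (- t)) \<partial>lborel) = 0"
      unfolding g_eq by (rule integral_mult_poly_exp_eq_0[OF D supp mom])
    moreover have "integrable lborel (\<lambda>t. D t * \<phi> (exp (- t)))"
      by (rule integrable_mult_bounded_on_pos[OF D supp \<phi>m \<phi>1])
    ultimately have "?I = (\<integral>t. D t * (\<phi> (exp (- t)) - g (exp (- t))) \<partial>lborel)"
      by (simp add: right_diff_distrib)
    also have "\<bar>\<dots>\<bar> \<le> e * ?N"
      using gm \<phi>m g exp_01
      by (intro abs_integral_mult_le_on_pos[OF D supp]) (auto intro: less_imp_le)
    finally show ?thesis .
  qed
  have "\<bar>?I\<bar> \<le> 0 + e" if e: "e > 0" for e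
  proof -
    have N: "?N \<ge> 0" by simp
    have frac: "e / (x + 1) * x \<le> e" if "x \<ge> 0" for x :: real
      using that e by (simp add: field_simps)
    have "e / (?N + 1) > 0" by (intro divide_pos_pos e) (use N in linarith)
    then have "\<bar>?I\<bar> \<le> e / (?N + 1) * ?N" by (rule approx)
    also have "\<dots> \<le> e"
      using frac[OF N] .
    finally show ?thesis by simp
  qed
  then show ?thesis using field_le_epsilon[of "\<bar>?I\<bar>" 0] by simp
qed

lemma tendsto_ramp_indicator_greaterThan:
  fixes x t :: real
  shows "(\<lambda>j. min 1 (max 0 (real j * (exp (- x) - exp (- t))))) \<longlonglongrightarrow> indicator {x<..} t"
proof (cases "t > x")
  case True
  then have pos: "exp (- x) - exp (- t) > 0" by simp
  obtain N :: nat where N: "real N \<ge> 1 / (exp (- x) - exp (- t))"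
    using real_arch_simple by blast
  have "min 1 (max 0 (real j * (exp (- x) - exp (- t)))) = 1" if "j \<ge> N" for j
  proof -
    have "1 \<le> real N * (exp (- x) - exp (- t))" using N pos by (simp add: field_simps)
    also have "\<dots> \<le> real j * (exp (- x) - exp (- t))" using that pos by (intro mult_right_mono) auto
    finally show ?thesis by simp
  qed
  then have "(\<lambda>j. min 1 (max 0 (real j * (exp (- x) - exp (- t))))) \<longlonglongrightarrow> 1"
    by (intro tendsto_eventually eventually_sequentiallyI)
  then show ?thesis using True by simp
next
  case False
  then have "exp (- x) - exp (- t) \<le> 0" by simp
  then have "min 1 (max 0 (real j * (exp (- x) - exp (- t)))) = 0" for j
    by (simp add: mult_nonneg_nonpos)
  then show ?thesis using False by simp
qed

lemma integral_mult_indicator_greaterThan_eq_0: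
  fixes D :: "real \<Rightarrow> real"
  assumes D: "integrable lborel D" and supp: "\<And>t. t \<le> 0 \<Longrightarrow> D t = 0"
    and mom: "\<And>k::nat. (\<integral>t. D t * exp (- (real k * t)) \<partial>lborel) = 0"
  shows "(\<integral>t. D t * indicator {x<..} t \<partial>lborel) = 0"
proof -
  define \<phi> where "\<phi> j u = min 1 (max 0 (real j * (exp (- x) - u)))" for j :: nat and u
  have \<phi>1: "\<bar>\<phi> j u\<bar> \<le> 1" for j u
    unfolding \<phi>_def by auto
  have "continuous_on UNIV (\<phi> j)" for j
    unfolding \<phi>_def by (intro continuous_intros)
  then have zero: "(\<integral>t. D t * \<phi> j (exp (- t)) \<partial>lborel) = 0" for j
    using \<phi>1 by (intro integral_mult_continuous_exp_eq_0[OF D supp mom])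
  have "(\<lambda>j. \<integral>t. D t * \<phi> j (exp (- t)) \<partial>lborel) \<longlonglongrightarrow> (\<integral>t. D t * indicator {x<..} t \<partial>lborel)"
  proof (rule integral_dominated_convergence[where w = "\<lambda>t. \<bar>D t\<bar>"])
    show "(\<lambda>t. D t * indicator {x<..} t) \<in> borel_measurable lborel" using D by measurable
    show "(\<lambda>t. D t * \<phi> j (exp (- t))) \<in> borel_measurable lborel" for j
      using D unfolding \<phi>_def by measurable
    show "integrable lborel (\<lambda>t. \<bar>D t\<bar>)" using D by auto
    show "AE t in lborel. (\<lambda>j. D t * \<phi> j (exp (- t))) \<longlonglongrightarrow> D t * indicator {x<..} t"
      unfolding \<phi>_def by (intro AE_I2 tendsto_mult tendsto_const tendsto_ramp_indicator_greaterThan)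
    show "AE t in lborel. norm (D t * \<phi> j (exp (- t))) \<le> \<bar>D t\<bar>" for j
      using \<phi>1[of j "exp (- _)"] by (intro AE_I2) (simp add: abs_mult mult_left_le)
  qed
  then show ?thesis by (simp add: zero LIMSEQ_const_iff)
qed

(* The positive and negative parts of D have equal integrals over every half-line (x, oo),
  so they are densities of the same measure. *)
lemma AE_zero_if_moments_exp_zero:
  fixes D :: "real \<Rightarrow> real"
  assumes D: "integrable lborel D" and supp: "\<And>t. t \<le> 0 \<Longrightarrow> D t = 0"
    and mom: "\<And>k::nat. (\<integral>t. D t * exp (- (real k * t)) \<partial>lborel) = 0"
  shows "AE t in lborel. D t = 0"
proof -
  define P where "P t = max 0 (D t)" for t
  define Q where "Q t = max 0 (- D t)" for t
  have [measurable]: "D \<in> borel_measurable borel" using D by auto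
  have tail: "emeasure (density lborel (\<lambda>t. ennreal (F t))) {x<..}
      = ennreal (\<integral>t. F t * indicator {x<..} t \<partial>lborel)"
    if F: "integrable lborel F" "\<And>t. F t \<ge> 0" for F :: "real \<Rightarrow> real" and x :: real
  proof -
    have [measurable]: "F \<in> borel_measurable borel" using F by auto
    have "emeasure (density lborel (\<lambda>t. ennreal (F t))) {x<..}
        = (\<integral>\<^sup>+t. ennreal (F t) * indicator {x<..} t \<partial>lborel)"
      by (rule emeasure_density) measurable
    also have "\<dots> = (\<integral>\<^sup>+t. ennreal (F t * indicator {x<..} t) \<partial>lborel)"
      by (intro nn_integral_cong) (simp add: indicator_def)
    also have "\<dots> = ennreal (\<integral>t. F t * indicator {x<..} t \<partial>lborel)"
      using F by (intro nn_integral_eq_integral integrable_real_mult_indicator) auto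
    finally show ?thesis .
  qed
  have "(\<integral>t. P t * indicator {x<..} t \<partial>lborel) = (\<integral>t. Q t * indicator {x<..} t \<partial>lborel)" for x
  proof -
    have "integrable lborel (\<lambda>t. F t * indicator {x<..} t)"
      if "integrable lborel F" for F :: "real \<Rightarrow> real"
      using that by (intro integrable_real_mult_indicator) auto
    moreover have "integrable lborel P" "integrable lborel Q"
      using D unfolding P_def Q_def by auto
    ultimately have "(\<integral>t. P t * indicator {x<..} t \<partial>lborel) - (\<integral>t. Q t * indicator {x<..} t \<partial>lborel)
        = (\<integral>t. P t * indicator {x<..} t - Q t * indicator {x<..} t \<partial>lborel)"
      by simp
    also have "\<dots> = (\<integral>t. D t * indicator {x<..} t \<partial>lborel)"
      by (intro Bochner_Integration.integral_cong) (auto simp: P_def Q_def indicator_def)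
    also have "\<dots> = 0" by (rule integral_mult_indicator_greaterThan_eq_0[OF D supp mom])
    finally show ?thesis by simp
  qed
  then have "density lborel (\<lambda>t. ennreal (P t)) = density lborel (\<lambda>t. ennreal (Q t))"
    using D by (intro measure_eqI_lessThan) (auto simp: tail P_def Q_def open_greaterThan)
  then have "AE t in lborel. ennreal (P t) = ennreal (Q t)"
    by (intro sigma_finite_measure.density_unique[OF sigma_finite_lborel]) (auto simp: P_def Q_def)
  then show ?thesis
    by eventually_elim (auto simp: P_def Q_def max_def split: if_splits)
qed

lemma AE_zero_if_laplace_zero:
  fixes D :: "real \<Rightarrow> real"
  assumes D: "integrable lborel D" and supp: "\<And>t. t \<le> 0 \<Longrightarrow> D t = 0"
    and laplace: "\<And>k::nat. (\<integral>t. D t * exp (- ((real k + 1) * t)) \<partial>lborel) = 0"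
  shows "AE t in lborel. D t = 0"
proof -
  have "AE t in lborel. D t * exp (- t) = 0"
  proof (rule AE_zero_if_moments_exp_zero)
    show "integrable lborel (\<lambda>t. D t * exp (- t))"
      using integrable_mult_exp_on_pos[OF D supp, of 1] by simp
    show "(\<integral>t. D t * exp (- t) * exp (- (real k * t)) \<partial>lborel) = 0" for k
      using laplace[of k] by (simp add: mult.assoc exp_add[symmetric] algebra_simps)
  qed (use supp in auto)
  then show ?thesis by simp
qed

section \<open>Absolutely convergent series in $L^1$\<close>

lemma AE_summable_abs_if_summable_L1:
  fixes F :: "nat \<Rightarrow> real \<Rightarrow> real"
  assumes iF: "\<And>n. integrable lborel (F n)"
    and sF: "summable (\<lambda>n. \<integral>t. \<bar>F n t\<bar> \<partial>lborel)"
  shows "AE t in lborel. summable (\<lambda>n. \<bar>F n t\<bar>)"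
proof -
  have [measurable]: "F n \<in> borel_measurable borel" for n using iF by auto
  have "(\<integral>\<^sup>+t. (\<Sum>n. ennreal \<bar>F n t\<bar>) \<partial>lborel) = (\<Sum>n. \<integral>\<^sup>+t. ennreal \<bar>F n t\<bar> \<partial>lborel)"
    by (intro nn_integral_suminf) auto
  also have "\<dots> = (\<Sum>n. ennreal (\<integral>t. \<bar>F n t\<bar> \<partial>lborel))"
    using iF by (simp add: nn_integral_eq_integral)
  also have "\<dots> = ennreal (\<Sum>n. \<integral>t. \<bar>F n t\<bar> \<partial>lborel)"
    by (intro suminf_ennreal2 sF) simp
  finally have "(\<integral>\<^sup>+t. (\<Sum>n. ennreal \<bar>F n t\<bar>) \<partial>lborel) \<noteq> \<infinity>" by simp
  then have "AE t in lborel. (\<Sum>n. ennreal \<bar>F n t\<bar>) \<noteq> \<infinity>"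
    by (intro nn_integral_PInf_AE) auto
  then show ?thesis by eventually_elim (auto intro: summable_suminf_not_top)
qed

lemma integrable_suminf_if_summable_L1:
  fixes F :: "nat \<Rightarrow> real \<Rightarrow> real"
  assumes iF: "\<And>n. integrable lborel (F n)"
    and sF: "summable (\<lambda>n. \<integral>t. \<bar>F n t\<bar> \<partial>lborel)"
  shows "integrable lborel (\<lambda>t. \<Sum>n. F n t)"
  using AE_summable_abs_if_summable_L1[OF iF sF] sF
  by (intro integrable_suminf[OF iF]) simp_all

lemma sums_integral_mult_bounded_on_pos:
  fixes F :: "nat \<Rightarrow> real \<Rightarrow> real" and h :: "real \<Rightarrow> real"
  assumes iF: "\<And>n. integrable lborel (F n)"
    and sF: "summable (\<lambda>n. \<integral>t. \<bar>F n t\<bar> \<partial>lborel)"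
    and supp: "\<And>n t. t \<le> 0 \<Longrightarrow> F n t = 0"
    and h[measurable]: "h \<in> borel_measurable borel" and h1: "\<And>t. t > 0 \<Longrightarrow> \<bar>h t\<bar> \<le> 1"
  shows "(\<lambda>n. \<integral>t. F n t * h t \<partial>lborel) sums (\<integral>t. (\<Sum>n. F n t) * h t \<partial>lborel)"
proof -
  have [measurable]: "F n \<in> borel_measurable borel" for n using iF by auto
  have Fh: "\<bar>F n t * h t\<bar> \<le> \<bar>F n t\<bar>" for n t
  proof (cases "t \<le> 0")
    case False
    then show ?thesis using h1[of t] by (simp add: abs_mult mult_left_le)
  qed (simp add: supp)
  have AE_summable: "AE t in lborel. summable (\<lambda>n. \<bar>F n t\<bar>)"
    by (rule AE_summable_abs_if_summable_L1[OF iF sF])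
  have iFh: "integrable lborel (\<lambda>t. F n t * h t)" for n
    by (rule integrable_mult_bounded_on_pos[OF iF supp h h1])
  have "(\<lambda>n. \<integral>t. F n t * h t \<partial>lborel) sums (\<integral>t. (\<Sum>n. F n t * h t) \<partial>lborel)"
  proof (rule sums_integral[OF iFh])
    show "AE t in lborel. summable (\<lambda>n. norm (F n t * h t))"
      using AE_summable
    proof eventually_elim
      case (elim t)
      show ?case by (rule summable_comparison_test'[OF elim]) (simp add: Fh)
    qed
    show "summable (\<lambda>n. \<integral>t. norm (F n t * h t) \<partial>lborel)"
    proof (rule summable_comparison_test'[OF sF])
      show "norm (\<integral>t. norm (F n t * h t) \<partial>lborel) \<le> (\<integral>t. \<bar>F n t\<bar> \<partial>lborel)" for n
        using iFh iF Fh by (simp add: Bochner_Integration.integral_mono)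
    qed
  qed
  also have "(\<integral>t. (\<Sum>n. F n t * h t) \<partial>lborel) = (\<integral>t. (\<Sum>n. F n t) * h t \<partial>lborel)"
    using AE_summable
  proof (intro integral_cong_AE)
    show "AE t in lborel. (\<Sum>n. F n t * h t) = (\<Sum>n. F n t) * h t"
      using AE_summable by eventually_elim (simp add: suminf_mult2 summable_rabs_cancel)
  qed auto
  finally show ?thesis .
qed

lemma nn_integral_abs_minus_partial_sum_le:
  fixes F :: "nat \<Rightarrow> real \<Rightarrow> real" and G :: "real \<Rightarrow> real"
  assumes iF: "\<And>n. integrable lborel (F n)"
    and sF: "summable (\<lambda>n. \<integral>t. \<bar>F n t\<bar> \<partial>lborel)"
    and G: "AE t in lborel. G t = (\<Sum>n. F n t)"
  shows "(\<integral>\<^sup>+t. ennreal \<bar>G t - (\<Sum>n<N. F n t)\<bar> \<partial>lborel)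
      \<le> ennreal (\<Sum>i. \<integral>t. \<bar>F (i + N) t\<bar> \<partial>lborel)"
proof -
  have [measurable]: "F n \<in> borel_measurable borel" for n using iF by auto
  have "(\<integral>\<^sup>+t. ennreal \<bar>G t - (\<Sum>n<N. F n t)\<bar> \<partial>lborel)
      \<le> (\<integral>\<^sup>+t. (\<Sum>i. ennreal \<bar>F (i + N) t\<bar>) \<partial>lborel)"
  proof (rule nn_integral_mono_AE)
    show "AE t in lborel. ennreal \<bar>G t - (\<Sum>n<N. F n t)\<bar> \<le> (\<Sum>i. ennreal \<bar>F (i + N) t\<bar>)"
      using AE_summable_abs_if_summable_L1[OF iF sF] G
    proof eventually_elim
      case (elim t)
      have tail: "summable (\<lambda>i. \<bar>F (i + N) t\<bar>)"
        using summable_ignore_initial_segment[OF elim(1), of N] by simp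
      have "G t - (\<Sum>n<N. F n t) = (\<Sum>i. F (i + N) t)"
        using suminf_split_initial_segment[OF summable_rabs_cancel[OF elim(1)], of N] elim(2)
        by simp
      then have "\<bar>G t - (\<Sum>n<N. F n t)\<bar> \<le> (\<Sum>i. \<bar>F (i + N) t\<bar>)"
        using summable_rabs[OF tail] by simp
      then have "ennreal \<bar>G t - (\<Sum>n<N. F n t)\<bar> \<le> ennreal (\<Sum>i. \<bar>F (i + N) t\<bar>)"
        by (rule ennreal_leI)
      also have "\<dots> = (\<Sum>i. ennreal \<bar>F (i + N) t\<bar>)"
        by (rule suminf_ennreal2[symmetric]) (simp_all add: tail)
      finally show ?case .
    qed
  qed
  also have "\<dots> = (\<Sum>i. \<integral>\<^sup>+t. ennreal \<bar>F (i + N) t\<bar> \<partial>lborel)"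
    by (intro nn_integral_suminf) auto
  also have "\<dots> = (\<Sum>i. ennreal (\<integral>t. \<bar>F (i + N) t\<bar> \<partial>lborel))"
    using iF by (simp add: nn_integral_eq_integral)
  also have "\<dots> = ennreal (\<Sum>i. \<integral>t. \<bar>F (i + N) t\<bar> \<partial>lborel)"
    using summable_ignore_initial_segment[OF sF, of N] by (intro suminf_ennreal2) simp_all
  finally show ?thesis .
qed

lemma tendsto_nn_integral_abs_minus_partial_sum:
  fixes F :: "nat \<Rightarrow> real \<Rightarrow> real" and G :: "real \<Rightarrow> real"
  assumes iF: "\<And>n. integrable lborel (F n)"
    and sF: "summable (\<lambda>n. \<integral>t. \<bar>F n t\<bar> \<partial>lborel)"
    and G: "AE t in lborel. G t = (\<Sum>n. F n t)"
  shows "(\<lambda>N. \<integral>\<^sup>+t. ennreal \<bar>G t - (\<Sum>n<N. F n t)\<bar> \<partial>lborel) \<longlonglongrightarrow> 0"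
proof (rule tendsto_sandwich[OF _ _ tendsto_const])
  show "eventually (\<lambda>N. (\<integral>\<^sup>+t. ennreal \<bar>G t - (\<Sum>n<N. F n t)\<bar> \<partial>lborel)
      \<le> ennreal (\<Sum>i. \<integral>t. \<bar>F (i + N) t\<bar> \<partial>lborel)) sequentially"
    using nn_integral_abs_minus_partial_sum_le[OF iF sF G] by simp
  have "(\<lambda>N. \<Sum>i. \<integral>t. \<bar>F (i + N) t\<bar> \<partial>lborel) \<longlonglongrightarrow> 0"
    by (rule suminf_exist_split2[OF sF])
  then show "(\<lambda>N. ennreal (\<Sum>i. \<integral>t. \<bar>F (i + N) t\<bar> \<partial>lborel)) \<longlonglongrightarrow> 0"
    using tendsto_ennrealI by fastforce
qed simp

lemma L1_sums_if_laplace_sums: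
  fixes f :: "nat \<Rightarrow> real \<Rightarrow> real" and g :: "real \<Rightarrow> real"
  assumes iF: "\<And>n. integrable lborel (\<lambda>t. indicator {0<..} t * f n t)"
    and iG: "integrable lborel (\<lambda>t. indicator {0<..} t * g t)"
    and sF: "summable (\<lambda>n. \<integral>t. \<bar>indicator {0<..} t * f n t\<bar> \<partial>lborel)"
    and laplace: "\<And>k::nat.
      (\<lambda>n. \<integral>t. indicator {0<..} t * f n t * exp (- ((real k + 1) * t)) \<partial>lborel)
        sums (\<integral>t. indicator {0<..} t * g t * exp (- ((real k + 1) * t)) \<partial>lborel)"
  shows "L1_sums f g"
proof -
  define F where "F n t = indicator {0<..} t * f n t" for n t
  define G where "G t = indicator {0<..} t * g t" for t
  define H where "H t = (\<Sum>n. F n t)" for t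
  have iF': "integrable lborel (F n)" for n using iF unfolding F_def by simp
  have sF': "summable (\<lambda>n. \<integral>t. \<bar>F n t\<bar> \<partial>lborel)" using sF unfolding F_def by simp
  have iG': "integrable lborel G" using iG unfolding G_def by simp
  have iH: "integrable lborel H"
    unfolding H_def by (rule integrable_suminf_if_summable_L1[OF iF' sF'])
  have suppF: "F n t = 0" and suppG: "G t = 0" and suppH: "H t = 0" if "t \<le> 0" for n t
    using that unfolding F_def G_def H_def by simp_all
  have "AE t in lborel. G t - H t = 0"
  proof (rule AE_zero_if_laplace_zero)
    show "integrable lborel (\<lambda>t. G t - H t)" using iG' iH by simp
    fix k :: nat
    have "(\<lambda>n. \<integral>t. F n t * exp (- ((real k + 1) * t)) \<partial>lborel)
        sums (\<integral>t. H t * exp (- ((real k + 1) * t)) \<partial>lborel)"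
      unfolding H_def by (rule sums_integral_mult_bounded_on_pos[OF iF' sF' suppF]) auto
    then have "(\<integral>t. H t * exp (- ((real k + 1) * t)) \<partial>lborel)
        = (\<integral>t. G t * exp (- ((real k + 1) * t)) \<partial>lborel)"
      using laplace[of k] unfolding F_def G_def by (simp add: sums_unique2 mult.assoc)
    moreover have "integrable lborel (\<lambda>t. G t * exp (- ((real k + 1) * t)))"
      "integrable lborel (\<lambda>t. H t * exp (- ((real k + 1) * t)))"
      by (intro integrable_mult_exp_on_pos iG' iH suppG suppH; simp)+
    ultimately show "(\<integral>t. (G t - H t) * exp (- ((real k + 1) * t)) \<partial>lborel) = 0"
      by (simp add: left_diff_distrib)
  qed (simp add: suppG suppH)
  then have GH: "AE t in lborel. G t = (\<Sum>n. F n t)"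
    by eventually_elim (simp add: H_def)
  have "(\<lambda>N. \<integral>\<^sup>+t. ennreal \<bar>G t - (\<Sum>n<N. F n t)\<bar> \<partial>lborel) \<longlonglongrightarrow> 0"
    by (rule tendsto_nn_integral_abs_minus_partial_sum[OF iF' sF' GH])
  moreover have "(\<integral>\<^sup>+ t\<in>{0<..}. ennreal \<bar>g t - (\<Sum>n<N. f n t)\<bar> \<partial>lborel)
      = (\<integral>\<^sup>+t. ennreal \<bar>G t - (\<Sum>n<N. F n t)\<bar> \<partial>lborel)" for N
    by (intro nn_integral_cong) (auto simp: F_def G_def indicator_def)
  ultimately show ?thesis unfolding L1_sums_def by simp
qed

section \<open>Gamma integrals\<close>

lemma nn_integral_powr_exp_pos:
  fixes c s :: real
  assumes c: "c > -1" and s: "s > 0"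
  shows "(\<integral>\<^sup>+t. ennreal (indicator {0<..} t * (t powr c * exp (-(s*t)))) \<partial>lborel)
         = ennreal (Gamma (c + 1) / s powr (c + 1))"
proof -
  let ?f = "\<lambda>t. ennreal (indicator {0<..} t * (t powr c * exp (-(s*t))))"
  have "(\<integral>\<^sup>+t. ?f t \<partial>lborel) = \<bar>1/s\<bar> * (\<integral>\<^sup>+x. ?f (0 + (1/s) * x) \<partial>lborel)"
    by (rule nn_integral_real_affine) (use s in auto)
  also have "(\<lambda>x. ?f (0 + (1/s) * x)) = (\<lambda>x. ennreal (s powr (-c)) *
      ennreal (indicator {0..} x * x powr (c + 1 - 1) / exp x))"
  proof
    fix x
    show "?f (0 + (1/s) * x) = ennreal (s powr (-c)) *
        ennreal (indicator {0..} x * x powr (c + 1 - 1) / exp x)"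
    proof (cases "x > 0")
      case True
      have "(x / s) powr c = s powr (-c) * x powr c"
        using True s by (simp add: powr_divide powr_minus field_simps)
      then show ?thesis using True s
        by (simp add: ennreal_mult'[symmetric] exp_minus field_simps)
    next
      case False
      then have "\<not> (x / s > 0)" using s by (simp add: zero_less_divide_iff)
      then show ?thesis using s False by (cases "x = 0") (auto simp: indicator_def)
    qed
  qed
  also have "(\<integral>\<^sup>+x. ennreal (s powr (-c)) * ennreal (indicator {0..} x * x
      powr (c + 1 - 1) / exp x) \<partial>lborel)
      = ennreal (s powr (-c)) * ennreal (Gamma (c + 1))"
  proof -
    have g: "Gamma (c + 1) = (\<integral>\<^sup>+x. ennreal (indicator {0..} x * x
        powr (c + 1 - 1) / exp x) \<partial>lborel)"
      by (rule Gamma_conv_nn_integral_real) (use c in simp)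
    show ?thesis by (subst nn_integral_cmult) (auto simp: g)
  qed
  also have "\<bar>1/s\<bar> * (ennreal (s powr (-c)) * ennreal (Gamma (c + 1))) =
      ennreal (Gamma (c + 1) / s powr (c + 1))"
    using s c by (simp add: ennreal_mult'[symmetric] powr_add powr_minus field_simps)
  finally show ?thesis .
qed

lemma
  fixes c s :: real
  assumes c: "c > -1" and s: "s > 0"
  shows integrable_powr_exp_pos: "integrable lborel (\<lambda>t. indicator {0<..} t *
      (t powr c * exp (-(s*t))))"
    and integral_powr_exp_pos: "(\<integral>t. indicator {0<..} t * (t powr c * exp (-(s*t))) \<partial>lborel) =
        Gamma (c + 1) / s powr (c + 1)"
proof -
  have "integrable lborel (\<lambda>t. indicator {0<..} t * (t powr c * exp (-(s*t)))) \<and>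
        (\<integral>t. indicator {0<..} t * (t powr c * exp (-(s*t))) \<partial>lborel) =
            Gamma (c + 1) / s powr (c + 1)"
    using nn_integral_powr_exp_pos[OF c s]
    by (subst (asm) nn_integral_eq_integrable) (use c s in \<open>auto intro!:
        divide_nonneg_pos Gamma_real_nonneg\<close>)
  then show "integrable lborel (\<lambda>t. indicator {0<..} t * (t powr c * exp (-(s*t))))"
    and "(\<integral>t. indicator {0<..} t * (t powr c * exp (-(s*t))) \<partial>lborel) =
        Gamma (c + 1) / s powr (c + 1)"
    by auto
qed

lemma
  fixes e a :: "'i \<Rightarrow> real" and s :: real
  assumes I: "finite I" and e: "\<And>i. i \<in> I \<Longrightarrow> e i > -1" and s: "s > 0"
  shows integrable_sum_powr_exp_pos: "integrable lborel (\<lambda>t. indicator {0<..} t *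
      (\<Sum>i\<in>I. a i * (t powr e i * exp (-(s*t)))))"
    and integral_sum_powr_exp_pos: "(\<integral>t. indicator {0<..} t *
        (\<Sum>i\<in>I. a i * (t powr e i * exp (-(s*t)))) \<partial>lborel)
         = (\<Sum>i\<in>I. a i * (Gamma (e i + 1) / s powr (e i + 1)))"
proof -
  have eq: "(\<lambda>t. indicator {0<..} t * (\<Sum>i\<in>I. a i * (t powr e i * exp (-(s*t)))))
      = (\<lambda>t. \<Sum>i\<in>I. a i * (indicator {0<..} t * (t powr e i * exp (-(s*t)))))"
    by (simp add: sum_distrib_left mult_ac)
  have ii: "integrable lborel (\<lambda>t. a i * (indicator {0<..} t *
      (t powr e i * exp (-(s*t)))))" if "i \<in> I" for i
    using integrable_powr_exp_pos[OF e[OF that] s] by simp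
  show "integrable lborel (\<lambda>t. indicator {0<..} t * (\<Sum>i\<in>I. a i * (t powr e i * exp (-(s*t)))))"
    unfolding eq by (rule Bochner_Integration.integrable_sum) (use ii in auto)
  show "(\<integral>t. indicator {0<..} t * (\<Sum>i\<in>I. a i * (t powr e i * exp (-(s*t)))) \<partial>lborel)
         = (\<Sum>i\<in>I. a i * (Gamma (e i + 1) / s powr (e i + 1)))"
    unfolding eq
    by (subst Bochner_Integration.integral_sum) (use ii integral_powr_exp_pos[OF e s] in auto)
qed

section \<open>Laguerre polynomials\<close>

lemma gbinomial_div_fact_Gamma:
  fixes \<alpha> :: real
  assumes a: "\<alpha> > -1" and k: "k \<le> n"
  shows "((real n + \<alpha>) gchoose (n - k)) / fact k
       = Gamma (real n + \<alpha> + 1) / fact n * real (n choose k) / Gamma (\<alpha> + 1 + real k)"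
proof -
  have nz: "\<alpha> + 1 + real k \<notin> \<int>\<^sub>\<le>\<^sub>0" using a
    by (auto elim!: nonpos_Ints_cases)
  have "((real n + \<alpha>) gchoose (n - k)) = pochhammer (\<alpha> + 1 + real k) (n - k) / fact (n - k)"
    using k by (subst gbinomial_pochhammer') (simp add: of_nat_diff algebra_simps)
  also have "pochhammer (\<alpha> + 1 + real k) (n - k) = Gamma (real n + \<alpha> + 1) / Gamma (\<alpha> + 1 + real k)"
    using k nz by (subst pochhammer_Gamma) (auto simp: of_nat_diff algebra_simps)
  finally have 1: "((real n + \<alpha>) gchoose (n - k)) = Gamma (real n + \<alpha> + 1) /
      Gamma (\<alpha> + 1 + real k) / fact (n - k)" .
  have 2: "real (n choose k) = fact n / (fact k * fact (n - k))"
    using k by (simp add: binomial_fact)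
  have G: "Gamma (\<alpha> + 1 + real k) > 0" using a by (intro Gamma_real_pos) simp
  show ?thesis unfolding 1 2 using G by (simp add: field_simps)
qed

definition laguerre_coeff :: "nat \<Rightarrow> real \<Rightarrow> nat \<Rightarrow> real" where
  "laguerre_coeff n \<alpha> k = (-1)^k * real (n choose k) / Gamma (\<alpha> + 1 + real k)"

definition laguerre_scaled :: "nat \<Rightarrow> real \<Rightarrow> real \<Rightarrow> real" where
  "laguerre_scaled n \<alpha> t = (\<Sum>k\<le>n. laguerre_coeff n \<alpha> k * t ^ k)"

lemma laguerre_eq_scaled:
  assumes a: "\<alpha> > -1"
  shows "laguerre n \<alpha> t = Gamma (real n + \<alpha> + 1) / fact n * laguerre_scaled n \<alpha> t"
  unfolding laguerre_def laguerre_scaled_def laguerre_coeff_def sum_distrib_left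
proof (rule sum.cong[OF refl])
  fix k assume k: "k \<in> {..n}"
  have "(-1) ^ k * ((real n + \<alpha>) gchoose (n - k)) * t ^ k / fact k
      = (-1) ^ k * t ^ k * (((real n + \<alpha>) gchoose (n - k)) / fact k)" by simp
  also have "\<dots> = (-1) ^ k * t ^ k * (Gamma (real n + \<alpha> + 1) / fact n * real (n choose k) /
      Gamma (\<alpha> + 1 + real k))"
    using gbinomial_div_fact_Gamma[OF a, of k n] k by simp
  finally show "(-1) ^ k * ((real n + \<alpha>) gchoose (n - k)) * t ^ k / fact k =
      Gamma (real n + \<alpha> + 1) / fact n * ((-1) ^ k * real (n choose k) /
          Gamma (\<alpha> + 1 + real k) * t ^ k)"
    by simp
qed

lemma ell_eq_scaled:
  assumes a: "\<alpha> > -1"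
  shows "ell n \<alpha> t = t powr \<alpha> * exp (-t) * laguerre_scaled n \<alpha> t"
proof -
  have G: "Gamma (real n + \<alpha> + 1) > 0" using a by (intro Gamma_real_pos) simp
  show ?thesis unfolding ell_def laguerre_eq_scaled[OF a] using G by simp
qed

lemma laguerre_eq_diff_param:
  "laguerre n \<alpha> t = laguerre n (\<alpha> + 1) t - (if n = 0 then 0 else laguerre (n - 1) (\<alpha> + 1) t)"
proof (cases n)
  case 0 then show ?thesis by (simp add: laguerre_def)
next
  case (Suc m)
  have A: "laguerre (Suc m) (\<alpha> + 1) t = (\<Sum>k\<le>m. (-1)^k *
      ((real (Suc m) + (\<alpha> + 1)) gchoose (Suc m - k)) * t ^ k / fact k)
        + (-1)^(Suc m) * t ^ Suc m / fact (Suc m)"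
    by (simp add: laguerre_def)
  have B: "laguerre (Suc m) \<alpha> t = (\<Sum>k\<le>m. (-1)^k * ((real (Suc m) + \<alpha>)
      gchoose (Suc m - k)) * t ^ k / fact k)
        + (-1)^(Suc m) * t ^ Suc m / fact (Suc m)"
    by (simp add: laguerre_def)
  have C: "laguerre m (\<alpha> + 1) t = (\<Sum>k\<le>m. (-1)^k * ((real (Suc m) + \<alpha>)
      gchoose (m - k)) * t ^ k / fact k)"
    unfolding laguerre_def by (intro sum.cong refl) (simp add: add_ac)
  have D: "(\<Sum>k\<le>m. (-1)^k * ((real (Suc m) + (\<alpha> + 1)) gchoose (Suc m - k)) * t ^ k / fact k)
      = (\<Sum>k\<le>m. (-1)^k * ((real (Suc m) + \<alpha>) gchoose (m - k)) * t ^ k / fact k)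
      + (\<Sum>k\<le>m. (-1)^k * ((real (Suc m) + \<alpha>) gchoose (Suc m - k)) * t ^ k / fact k)"
  proof -
    have "(\<Sum>k\<le>m. (-1)^k * ((real (Suc m) + (\<alpha> + 1)) gchoose (Suc m - k)) * t ^ k / fact k)
      = (\<Sum>k\<le>m. (-1)^k * ((real (Suc m) + \<alpha>) gchoose (m - k)) * t ^ k / fact k
              + (-1)^k * ((real (Suc m) + \<alpha>) gchoose (Suc m - k)) * t ^ k / fact k)"
    proof (intro sum.cong refl)
      fix k assume "k \<in> {..m}"
      then have k: "k \<le> m" by simp
      have "(real (Suc m) + (\<alpha> + 1)) gchoose (Suc m - k) =
          ((real (Suc m) + \<alpha>) + 1) gchoose (Suc (m - k))"
        using k by (simp add: Suc_diff_le add_ac)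
      also have "\<dots> = ((real (Suc m) + \<alpha>) gchoose (m - k)) +
          ((real (Suc m) + \<alpha>) gchoose (Suc (m - k)))"
        by (rule gbinomial_Suc_Suc)
      also have "Suc (m - k) = Suc m - k" using k by simp
      finally show "(-1)^k * ((real (Suc m) + (\<alpha> + 1)) gchoose (Suc m - k)) * t ^ k / fact k
          = (-1)^k * ((real (Suc m) + \<alpha>) gchoose (m - k)) * t ^ k / fact k
              + (-1)^k * ((real (Suc m) + \<alpha>) gchoose (Suc m - k)) * t ^ k / fact k"
        by (simp add: algebra_simps add_divide_distrib)
    qed
    also have "\<dots> = (\<Sum>k\<le>m. (-1)^k * ((real (Suc m) + \<alpha>) gchoose (m - k)) * t ^ k / fact k)
      + (\<Sum>k\<le>m. (-1)^k * ((real (Suc m) + \<alpha>) gchoose (Suc m - k)) * t ^ k / fact k)"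
      by (rule sum.distrib)
    finally show ?thesis .
  qed
  show ?thesis using A B C D Suc by simp
qed

lemma alternating_binomial_sum_Suc:
  fixes f :: "nat \<Rightarrow> real"
  shows "(\<Sum>k\<le>Suc n. (-1)^k * real (Suc n choose k) * f k)
       = (\<Sum>k\<le>n. (-1)^k * real (n choose k) * (f k - f (Suc k)))"
proof -
  define h where "h j = (-1)^j * real (n choose j) * f j" for j
  have B: "(\<Sum>k\<le>n. h (Suc k)) = (\<Sum>k\<le>n. h k) - f 0"
  proof -
    have "(\<Sum>k\<le>Suc n. h k) = h 0 + (\<Sum>k\<le>n. h (Suc k))" by (rule sum.atMost_Suc_shift)
    moreover have "(\<Sum>k\<le>Suc n. h k) = (\<Sum>k\<le>n. h k)" by (simp add: h_def)
    ultimately show ?thesis by (simp add: h_def)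
  qed
  have "(\<Sum>k\<le>Suc n. (-1)^k * real (Suc n choose k) * f k)
      = f 0 + (\<Sum>k\<le>n. (-1)^(Suc k) * real (Suc n choose Suc k) * f (Suc k))"
    by (subst sum.atMost_Suc_shift) simp
  also have "\<dots> = f 0 + (\<Sum>k\<le>n. (-1)^(Suc k) * real (n choose k) * f (Suc k) + h (Suc k))"
    by (intro arg_cong2[where f="(+)"] refl sum.cong) (simp_all add: h_def algebra_simps)
  also have "\<dots> = f 0 + (\<Sum>k\<le>n. (-1)^(Suc k) * real (n choose k) * f (Suc k)) + (\<Sum>k\<le>n. h (Suc k))"
    by (simp only: sum.distrib add.assoc)
  also have "\<dots> = (\<Sum>k\<le>n. (-1)^(Suc k) * real (n choose k) * f (Suc k)) + (\<Sum>k\<le>n. h k)"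
    using B by simp
  also have "\<dots> = (\<Sum>k\<le>n. (-1)^k * real (n choose k) * (f k - f (Suc k)))"
    by (simp add: h_def sum.distrib[symmetric] algebra_simps)
  finally show ?thesis .
qed

(* Up to the sign (-1)^n, the n-th forward difference of k \<mapsto> (c + k)^(m) (rising factorial).
  It vanishes for m < n; this is the orthogonality of the Laguerre polynomials. *)
definition pochhammer_alt_sum :: "nat \<Rightarrow> nat \<Rightarrow> real \<Rightarrow> real" where
  "pochhammer_alt_sum n m c = (\<Sum>k\<le>n. (-1)^k * real (n choose k) * pochhammer (c + real k) m)"

lemma pochhammer_alt_sum_eq:
  "pochhammer_alt_sum n m c = (-1)^n * (\<Prod>i<n. (real m - real i)) * pochhammer (c + real n) (m - n)"
proof (induction n arbitrary: m c)
  case 0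
  show ?case by (simp add: pochhammer_alt_sum_def)
next
  case (Suc n)
  have step: "pochhammer_alt_sum (Suc n) m c = (\<Sum>k\<le>n. (-1)^k * real (n choose k) *
       (pochhammer (c + real k) m - pochhammer (c + real (Suc k)) m))"
    unfolding pochhammer_alt_sum_def by (rule alternating_binomial_sum_Suc)
  show ?case
  proof (cases m)
    case 0
    then show ?thesis using step by (auto simp: prod.lessThan_Suc_shift)
  next
    case (Suc m')
    have d: "pochhammer (c + real k) (Suc m') - pochhammer (c + real (Suc k)) (Suc m')
        = - real (Suc m') * pochhammer ((c + 1) + real k) m'" for k
    proof -
      have "pochhammer (c + real k) (Suc m') = (c + real k) * pochhammer (c + real k + 1) m'"
        by (rule pochhammer_rec)
      moreover have "pochhammer (c + real (Suc k)) (Suc m') = pochhammer (c + real k + 1) m' *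
          (c + real k + 1 + real m')"
        by (subst pochhammer_Suc) (simp add: add_ac)
      ultimately show ?thesis by (simp add: algebra_simps)
    qed
    have "pochhammer_alt_sum (Suc n) m c = (\<Sum>k\<le>n. (-1)^k * real (n choose k) *
        (- real (Suc m') * pochhammer ((c + 1) + real k) m'))"
      using step by (simp only: Suc d)
    also have "\<dots> = - real (Suc m') * pochhammer_alt_sum n m' (c + 1)"
      unfolding pochhammer_alt_sum_def by (simp add: sum_distrib_left mult_ac)
    also have "\<dots> = - real (Suc m') * ((-1)^n * (\<Prod>i<n. (real m' - real i)) *
        pochhammer (c + 1 + real n) (m' - n))"
      by (simp add: Suc.IH)
    also have "\<dots> = (-1)^(Suc n) * (\<Prod>i<Suc n. (real m - real i)) *
        pochhammer (c + real (Suc n)) (m - Suc n)"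
    proof -
      have prod_Suc: "(\<Prod>i<Suc n. (real m - real i)) = real m * (\<Prod>i<n. (real m' - real i))"
        by (subst prod.lessThan_Suc_shift) (simp add: Suc)
      have poch_Suc: "pochhammer (c + real (Suc n)) (m - Suc n) =
          pochhammer (c + 1 + real n) (m' - n)"
        by (simp add: Suc add_ac)
      show ?thesis unfolding prod_Suc poch_Suc by (simp add: Suc algebra_simps)
    qed
    finally show ?thesis .
  qed
qed

lemma pochhammer_alt_sum_less: "m < n \<Longrightarrow> pochhammer_alt_sum n m c = 0"
proof -
  assume "m < n"
  then have "(\<Prod>i<n. (real m - real i)) = 0"
    by (intro prod_zero) (auto intro!: bexI[of _ m])
  then show ?thesis by (simp add: pochhammer_alt_sum_eq)
qed

lemma pochhammer_alt_sum_diag: "pochhammer_alt_sum n n c = (-1)^n * fact n"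
proof -
  have "(\<Prod>i<n. (real n - real i)) = fact n"
  proof -
    have "(\<Prod>i<n. (real n - real i)) = (\<Prod>i<n. real (n - i))"
      by (intro prod.cong) auto
    also have "\<dots> = real (\<Prod>i<n. (n - i))" by simp
    also have "(\<Prod>i<n. (n - i)) = fact n"
      using fact_prod_rev[of n, where 'a=nat] by (simp add: atLeast0LessThan)
    finally show ?thesis by simp
  qed
  then show ?thesis by (simp add: pochhammer_alt_sum_eq)
qed

lemma laguerre_coeff_Gamma_sum:
  assumes a: "\<alpha> > -1"
  shows "(\<Sum>k\<le>n. laguerre_coeff n \<alpha> k * Gamma (\<alpha> + real k + real m + 1))
       = pochhammer_alt_sum n m (\<alpha> + 1)"
  unfolding pochhammer_alt_sum_def laguerre_coeff_def
proof (rule sum.cong[OF refl])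
  fix k
  have nz: "\<alpha> + 1 + real k \<notin> \<int>\<^sub>\<le>\<^sub>0" using a by (auto elim!: nonpos_Ints_cases)
  have G: "Gamma (\<alpha> + 1 + real k) > 0" using a by (intro Gamma_real_pos) simp
  have "pochhammer (\<alpha> + 1 + real k) m = Gamma (\<alpha> + 1 + real k + real m) / Gamma (\<alpha> + 1 + real k)"
    by (rule pochhammer_Gamma[OF nz])
  then show "(-1)^k * real (n choose k) / Gamma (\<alpha> + 1 + real k) * Gamma (\<alpha> + real k + real m + 1)
       = (-1)^k * real (n choose k) * pochhammer (\<alpha> + 1 + real k) m"
    using G by (simp add: add_ac)
qed

lemma ell_mult_exp_eq_sum:
  assumes a: "\<alpha> > -1"
  shows "indicator {0<..} t * (c * ell n \<alpha> t) * exp (-(s * t)) =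
    indicator {0<..} t * (\<Sum>k\<le>n. (c * laguerre_coeff n \<alpha> k) *
        (t powr (\<alpha> + real k) * exp (-((s + 1) * t))))"
proof (cases "t > 0")
  case True
  have "c * ell n \<alpha> t * exp (-(s * t)) = c * (t powr \<alpha> * exp (-t) * laguerre_scaled
      n \<alpha> t) * exp (-(s * t))"
    by (simp add: ell_eq_scaled[OF a])
  also have "\<dots> = (\<Sum>k\<le>n. (c * laguerre_coeff n \<alpha> k) *
        (t powr \<alpha> * t ^ k * (exp (-t) * exp (-(s * t)))))"
    by (simp add: laguerre_scaled_def sum_distrib_left mult_ac)
  also have "\<dots> = (\<Sum>k\<le>n. (c * laguerre_coeff n \<alpha> k) *
        (t powr (\<alpha> + real k) * exp (-((s + 1) * t))))"
    using True by (simp add: powr_add powr_realpow exp_add[symmetric] algebra_simps)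
  finally show ?thesis using True by simp
qed simp

lemma integrable_ell:
  assumes a: "\<alpha> > -1"
  shows "integrable lborel (\<lambda>t. indicator {0<..} t * (c * ell n \<alpha> t))"
proof -
  have "integrable lborel (\<lambda>t. indicator {0<..} t * (c * ell n \<alpha> t) * exp (- (0 * t)))"
    unfolding ell_mult_exp_eq_sum[OF a] by (rule integrable_sum_powr_exp_pos) (use a in auto)
  then show ?thesis by simp
qed

lemma laplace_ell:
  assumes a: "\<alpha> > -1" and s: "s > -1"
  shows "(\<integral>t. indicator {0<..} t * (c * ell n \<alpha> t) * exp (-(s * t)) \<partial>lborel)
       = c * (s + 1) powr (-(\<alpha> + 1)) * (s / (s + 1)) ^ n"
proof -
  have "(\<integral>t. indicator {0<..} t * (c * ell n \<alpha> t) * exp (-(s * t)) \<partial>lborel)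
      = (\<integral>t. indicator {0<..} t * (\<Sum>k\<le>n. (c * laguerre_coeff n \<alpha> k) *
        (t powr (\<alpha> + real k) * exp (-((s + 1) * t)))) \<partial>lborel)"
    by (simp only: ell_mult_exp_eq_sum[OF a])
  also have "\<dots> = (\<Sum>k\<le>n. (c * laguerre_coeff n \<alpha> k) *
        (Gamma (\<alpha> + real k + 1) / (s + 1) powr (\<alpha> + real k + 1)))"
    by (rule integral_sum_powr_exp_pos) (use a s in auto)
  also have "\<dots> = c * (s + 1) powr (-(\<alpha> + 1)) * (\<Sum>k\<le>n. real (n choose k) *
      (-1 / (s + 1)) ^ k * 1 ^ (n - k))"
  proof -
    have "(c * laguerre_coeff n \<alpha> k) *
        (Gamma (\<alpha> + real k + 1) / (s + 1) powr (\<alpha> + real k + 1))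
        = c * (s + 1) powr (-(\<alpha> + 1)) * (real (n choose k) * (-1 / (s + 1))
            ^ k * 1 ^ (n - k))" for k
    proof -
      have G: "Gamma (\<alpha> + 1 + real k) > 0" using a by (intro Gamma_real_pos) simp
      define W where "W = (s + 1) powr (\<alpha> + 1)"
      have W: "W > 0" unfolding W_def using s by simp
      have p: "(s + 1) powr (\<alpha> + real k + 1) = W * (s + 1) ^ k"
        unfolding W_def using s by (simp add: powr_add powr_realpow algebra_simps)
      have q: "(s + 1) powr (-(\<alpha> + 1)) = 1 / W"
        unfolding W_def using powr_minus[of "s+1" "\<alpha> + 1"] by (simp add: divide_inverse)
      have g: "Gamma (\<alpha> + real k + 1) = Gamma (\<alpha> + 1 + real k)" by (simp add: add_ac)
      have r: "(-1 / (s + 1)) ^ k = (-1) ^ k / (s + 1) ^ k" by (rule power_divide)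
      have sp: "(s + 1) ^ k > 0" using s by simp
      show ?thesis unfolding p q g r using G sp W
        by (simp add: laguerre_coeff_def field_simps)
    qed
    then show ?thesis by (simp add: sum_distrib_left)
  qed
  also have "(\<Sum>k\<le>n. real (n choose k) * (-1 / (s + 1)) ^ k * 1 ^ (n - k)) = (-1 / (s + 1) + 1) ^ n"
    by (rule binomial_ring[symmetric])
  also have "-1 / (s + 1) + 1 = s / (s + 1)" using s by (simp add: field_simps)
  finally show ?thesis .
qed

lemma
  assumes a: "\<alpha> > -1"
  shows integrable_laguerre_scaled_sq: "integrable lborel (\<lambda>t. indicator {0<..} t *
      (t powr \<alpha> * exp (-t) * laguerre_scaled n \<alpha> t ^ 2))"
    and integral_laguerre_scaled_sq: "(\<integral>t. indicator {0<..} t *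
        (t powr \<alpha> * exp (-t) * laguerre_scaled n \<alpha> t ^ 2) \<partial>lborel) = fact n
            / Gamma (real n + \<alpha> + 1)"
proof -
  define c where "c = laguerre_coeff n \<alpha>"
  have pw: "indicator {0<..} t * (t powr \<alpha> * exp (-t) * laguerre_scaled n \<alpha> t ^ 2)
      = (\<Sum>m\<le>n. c m * (indicator {0<..} t * (\<Sum>k\<le>n. c k *
          (t powr (\<alpha> + real k + real m) * exp (-(1*t))))))" for t
  proof (cases "t > 0")
    case True
    have "t powr \<alpha> * exp (-t) * laguerre_scaled n \<alpha> t ^ 2 = t powr \<alpha> * exp (-t) *
        ((\<Sum>m\<le>n. c m * t^m) * (\<Sum>k\<le>n. c k * t^k))"
      by (simp add: laguerre_scaled_def c_def power2_eq_square mult_ac)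
    also have "\<dots> = (\<Sum>m\<le>n. c m * (\<Sum>k\<le>n. c k * (t powr \<alpha> * t^k * t^m * exp (-t))))"
      by (simp add: sum_distrib_left sum_distrib_right mult_ac)
    also have "\<dots> = (\<Sum>m\<le>n. c m * (\<Sum>k\<le>n. c k * (t powr (\<alpha> + real k + real m) * exp (-(1*t)))))"
      using True by (simp add: powr_add powr_realpow)
    finally show ?thesis using True by simp
  qed (simp)
  have ik: "integrable lborel (\<lambda>t. indicator {0<..} t *
      (\<Sum>k\<le>n. c k * (t powr (\<alpha> + real k + real m) * exp (-(1*t)))))" for m
    by (rule integrable_sum_powr_exp_pos) (use a in auto)
  have vk: "(\<integral>t. indicator {0<..} t * (\<Sum>k\<le>n. c k * (t powr (\<alpha> + real k + real m)
      * exp (-(1*t)))) \<partial>lborel)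
      = pochhammer_alt_sum n m (\<alpha> + 1)" for m
    by (subst integral_sum_powr_exp_pos) (use a in \<open>simp_all add: c_def
        laguerre_coeff_Gamma_sum[OF a, symmetric]\<close>)
  show "integrable lborel (\<lambda>t. indicator {0<..} t *
      (t powr \<alpha> * exp (-t) * laguerre_scaled n \<alpha> t ^ 2))"
    unfolding pw by (rule Bochner_Integration.integrable_sum) (use ik in auto)
  have "(\<integral>t. indicator {0<..} t * (t powr \<alpha> * exp (-t) * laguerre_scaled n \<alpha> t ^ 2) \<partial>lborel)
      = (\<Sum>m\<le>n. c m * pochhammer_alt_sum n m (\<alpha> + 1))"
    unfolding pw by (subst Bochner_Integration.integral_sum) (use ik vk in auto)
  also have "\<dots> = c n * pochhammer_alt_sum n n (\<alpha> + 1)"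
  proof -
    have "(\<Sum>m\<le>n. c m * pochhammer_alt_sum n m (\<alpha> + 1)) =
        (\<Sum>m\<in>{n}. c m * pochhammer_alt_sum n m (\<alpha> + 1))"
      by (rule sum.mono_neutral_right) (auto simp: pochhammer_alt_sum_less)
    then show ?thesis by simp
  qed
  also have "\<dots> = fact n / Gamma (real n + \<alpha> + 1)"
    by (simp add: c_def laguerre_coeff_def pochhammer_alt_sum_diag add_ac)
  finally show "(\<integral>t. indicator {0<..} t * (t powr \<alpha> * exp (-t) * laguerre_scaled n \<alpha> t ^ 2) \<partial>lborel)
      = fact n / Gamma (real n + \<alpha> + 1)" .
qed

lemma
  assumes a: "\<alpha> > -1"
  shows integrable_laguerre_sq: "integrable lborel (\<lambda>t. indicator {0<..} t *
      (t powr \<alpha> * exp (-t) * laguerre n \<alpha> t ^ 2))"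
    and integral_laguerre_sq: "(\<integral>t. indicator {0<..} t * (t powr \<alpha> * exp (-t) * laguerre n \<alpha> t ^ 2)
        \<partial>lborel) = Gamma (real n + \<alpha> + 1) / fact n"
proof -
  define K where "K = Gamma (real n + \<alpha> + 1) / fact n"
  have G: "Gamma (real n + \<alpha> + 1) > 0" using a by (intro Gamma_real_pos) simp
  have eq: "(\<lambda>t. indicator {0<..} t * (t powr \<alpha> * exp (-t) * laguerre n \<alpha> t ^ 2))
      = (\<lambda>t. K^2 * (indicator {0<..} t * (t powr \<alpha> * exp (-t) * laguerre_scaled n \<alpha> t ^ 2)))"
  proof (rule ext)
    fix t
    have lk: "laguerre n \<alpha> t = K * laguerre_scaled n \<alpha> t" unfolding K_def
        by (rule laguerre_eq_scaled[OF a])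
    show "indicator {0<..} t * (t powr \<alpha> * exp (-t) * laguerre n \<alpha> t ^ 2)
      = K^2 * (indicator {0<..} t * (t powr \<alpha> * exp (-t) * laguerre_scaled n \<alpha> t ^ 2))"
      unfolding lk by (simp add: power_mult_distrib mult_ac)
  qed
  show "integrable lborel (\<lambda>t. indicator {0<..} t * (t powr \<alpha> * exp (-t) * laguerre n \<alpha> t ^ 2))"
    unfolding eq using integrable_laguerre_scaled_sq[OF a] by simp
  have "(\<integral>t. indicator {0<..} t * (t powr \<alpha> * exp (-t) * laguerre n \<alpha> t ^ 2) \<partial>lborel) = K^2 *
      (fact n / Gamma (real n + \<alpha> + 1))"
    unfolding eq using integral_laguerre_scaled_sq[OF a] by simp
  also have "\<dots> = K" unfolding K_def using G by (simp add: power2_eq_square)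
  finally show "(\<integral>t. indicator {0<..} t * (t powr \<alpha> * exp (-t) * laguerre n \<alpha> t ^ 2) \<partial>lborel) =
      Gamma (real n + \<alpha> + 1) / fact n"
    unfolding K_def .
qed

lemma L1_norm_le_Cauchy_Schwarz:
  fixes h u v :: "real \<Rightarrow> real"
  assumes ih: "integrable lborel h"
    and um[measurable]: "u \<in> borel_measurable borel" and vm[measurable]:
        "v \<in> borel_measurable borel"
    and huv: "\<And>t. \<bar>h t\<bar> = \<bar>u t\<bar> * \<bar>v t\<bar>"
    and U: "(\<integral>\<^sup>+t. ennreal ((u t)^2) \<partial>lborel) \<le> ennreal A"
    and V: "(\<integral>\<^sup>+t. ennreal ((v t)^2) \<partial>lborel) \<le> ennreal B"
    and A: "A \<ge> 0" and B: "B \<ge> 0"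
  shows "(\<integral>t. \<bar>h t\<bar> \<partial>lborel) \<le> sqrt (A * B)"
proof -
  have cs: "(\<integral>\<^sup>+t. ennreal \<bar>u t\<bar> * ennreal \<bar>v t\<bar> \<partial>lborel)^2
      \<le> (\<integral>\<^sup>+t. ennreal \<bar>u t\<bar> ^ 2 \<partial>lborel) * (\<integral>\<^sup>+t. ennreal \<bar>v t\<bar> ^ 2 \<partial>lborel)"
    by (rule Cauchy_Schwarz_nn_integral) auto
  have e1: "(\<integral>\<^sup>+t. ennreal \<bar>u t\<bar> * ennreal \<bar>v t\<bar> \<partial>lborel) = ennreal (\<integral>t. \<bar>h t\<bar> \<partial>lborel)"
  proof -
    have "(\<integral>\<^sup>+t. ennreal \<bar>u t\<bar> * ennreal \<bar>v t\<bar> \<partial>lborel) = (\<integral>\<^sup>+t. ennreal \<bar>h t\<bar> \<partial>lborel)"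
      by (intro nn_integral_cong) (simp add: huv ennreal_mult)
    also have "\<dots> = ennreal (\<integral>t. \<bar>h t\<bar> \<partial>lborel)"
      by (intro nn_integral_eq_integral) (auto intro: ih)
    finally show ?thesis .
  qed
  have e2: "(\<integral>\<^sup>+t. ennreal \<bar>u t\<bar> ^ 2 \<partial>lborel) = (\<integral>\<^sup>+t. ennreal ((u t)^2) \<partial>lborel)"
    by (intro nn_integral_cong) (simp add: ennreal_power)
  have e3: "(\<integral>\<^sup>+t. ennreal \<bar>v t\<bar> ^ 2 \<partial>lborel) = (\<integral>\<^sup>+t. ennreal ((v t)^2) \<partial>lborel)"
    by (intro nn_integral_cong) (simp add: ennreal_power)
  have "ennreal ((\<integral>t. \<bar>h t\<bar> \<partial>lborel)^2) = ennreal (\<integral>t. \<bar>h t\<bar> \<partial>lborel) ^ 2"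
    by (simp add: ennreal_power)
  also have "\<dots> \<le> ennreal A * ennreal B"
    using cs unfolding e1 e2 e3 using U V by (meson mult_mono' zero_le order_trans)
  also have "\<dots> = ennreal (A * B)" using A B by (simp add: ennreal_mult)
  finally have "(\<integral>t. \<bar>h t\<bar> \<partial>lborel)^2 \<le> A * B"
    using A B by (simp add: ennreal_le_iff)
  then show ?thesis by (rule real_le_rsqrt)
qed

lemma L1_norm_ell_le:
  assumes a: "\<alpha> > -1"
  shows "(\<integral>t. \<bar>indicator {0<..} t * ell n \<alpha> t\<bar> \<partial>lborel) \<le>
      sqrt (Gamma (\<alpha> + 1) * (fact n / Gamma (real n + \<alpha> + 1)))"
proof (rule L1_norm_le_Cauchy_Schwarz)
  show "integrable lborel (\<lambda>t. indicator {0<..} t * ell n \<alpha> t)"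
    using integrable_ell[OF a, of 1 n] by simp
  let ?u = "\<lambda>t. indicator {0<..} t * sqrt (t powr \<alpha> * exp (-t))"
  let ?v = "\<lambda>t. indicator {0<..} t * sqrt (t powr \<alpha> * exp (-t)) * laguerre_scaled n \<alpha> t"
  show "?u \<in> borel_measurable borel" by measurable
  show "?v \<in> borel_measurable borel" unfolding laguerre_scaled_def by measurable
  show "\<bar>indicator {0<..} t * ell n \<alpha> t\<bar> = \<bar>?u t\<bar> * \<bar>?v t\<bar>" for t
  proof (cases "t > 0")
    case True
    have "sqrt (t powr \<alpha> * exp (-t)) * sqrt (t powr \<alpha> * exp (-t)) = t powr \<alpha> * exp (-t)"
      using True by simp
    then show ?thesis using True by (simp add: ell_eq_scaled[OF a] abs_mult)
  qed simp
  have "(\<integral>\<^sup>+t. ennreal ((?u t)^2) \<partial>lborel) = (\<integral>\<^sup>+t.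
      ennreal (indicator {0<..} t * (t powr (\<alpha>) * exp (-(1 * t)))) \<partial>lborel)"
    by (intro nn_integral_cong) (auto simp: indicator_def power2_eq_square)
  also have "\<dots> = ennreal (Gamma (\<alpha> + 1))"
    using nn_integral_powr_exp_pos[OF a, of 1] by simp
  finally show "(\<integral>\<^sup>+t. ennreal ((?u t)^2) \<partial>lborel) \<le> ennreal (Gamma (\<alpha> + 1))" by simp
  have "(\<integral>\<^sup>+t. ennreal ((?v t)^2) \<partial>lborel) = (\<integral>\<^sup>+t.
      ennreal (indicator {0<..} t * (t powr \<alpha> * exp (-t) * laguerre_scaled n \<alpha> t ^ 2)) \<partial>lborel)"
    by (intro nn_integral_cong) (auto simp: indicator_def power2_eq_square)
  also have "\<dots> = ennreal (\<integral>t. indicator {0<..} t * (t powr \<alpha> * exp (-t) *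
      laguerre_scaled n \<alpha> t ^ 2) \<partial>lborel)"
    using integrable_laguerre_scaled_sq[OF a, of n] by (intro nn_integral_eq_integral) auto
  also have "\<dots> = ennreal (fact n / Gamma (real n + \<alpha> + 1))"
    using integral_laguerre_scaled_sq[OF a, of n] by simp
  finally show "(\<integral>\<^sup>+t. ennreal ((?v t)^2) \<partial>lborel) \<le>
      ennreal (fact n / Gamma (real n + \<alpha> + 1))" by simp
  show "Gamma (\<alpha> + 1) \<ge> 0" using a by (intro Gamma_real_nonneg) simp
  have "Gamma (real n + \<alpha> + 1) > 0" using a by (intro Gamma_real_pos) simp
  then show "fact n / Gamma (real n + \<alpha> + 1) \<ge> 0" by simp
qed

section \<open>Growth of Pochhammer symbols\<close>

lemma rGamma_series_eq: "n > 0 \<Longrightarrow> rGamma_series (z::real) n = pochhammer z (Suc n) /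
    (fact n * real n powr z)"
  by (simp add: rGamma_series_def powr_def)

lemma abs_pochhammer_eventually_le:
  fixes z :: real
  shows "\<exists>B N. \<forall>n\<ge>N. \<bar>pochhammer z n\<bar> \<le> B * fact n * real n powr (z - 1)"
proof -
  have "convergent (rGamma_series z)" using rGamma_series_LIMSEQ by (auto simp: convergent_def)
  then have "Bseq (rGamma_series z)" by (rule convergent_imp_Bseq)
  then obtain B0 where B0: "B0 > 0" "\<And>n. norm (rGamma_series z n) \<le> B0" by (auto simp: Bseq_def)
  obtain N :: nat where N: "real N \<ge> 2 * \<bar>z\<bar> + 1" using real_arch_simple by blast
  have "\<forall>n\<ge>N. \<bar>pochhammer z n\<bar> \<le> (2 * B0) * fact n * real n powr (z - 1)"
  proof (intro allI impI)
    fix n assume n: "n \<ge> N"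
    then have npos: "real n > 0" using N by linarith
    have zn: "\<bar>z + real n\<bar> \<ge> real n / 2" using n N by linarith
    have pos: "fact n * real n powr z > 0" using npos by simp
    have "pochhammer z (Suc n) = rGamma_series z n * (fact n * real n powr z)"
      using npos pos by (simp add: rGamma_series_eq)
    then have "\<bar>pochhammer z (Suc n)\<bar> = \<bar>rGamma_series z n\<bar> * (fact n * real n powr z)"
      using pos by (simp add: abs_mult)
    also have "\<dots> \<le> B0 * (fact n * real n powr z)"
      using B0(2)[of n] pos by (intro mult_right_mono) auto
    finally have 1: "\<bar>pochhammer z (Suc n)\<bar> \<le> B0 * (fact n * real n powr z)" .
    have "\<bar>pochhammer z (Suc n)\<bar> = \<bar>pochhammer z n\<bar> * \<bar>z + real n\<bar>"
      by (simp add: pochhammer_Suc abs_mult)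
    moreover have "\<bar>pochhammer z n\<bar> * (real n / 2) \<le> \<bar>pochhammer z n\<bar> * \<bar>z + real n\<bar>"
      using zn by (intro mult_left_mono) auto
    ultimately have 2: "\<bar>pochhammer z n\<bar> * (real n / 2) \<le> B0 * (fact n * real n powr z)"
      using 1 by linarith
    have 3: "real n powr z = real n * real n powr (z - 1)"
      using npos by (simp add: powr_diff)
    have "\<bar>pochhammer z n\<bar> * real n \<le> (2 * B0 * fact n * real n powr (z - 1)) * real n"
      using 2 unfolding 3 by (simp add: field_simps)
    then show "\<bar>pochhammer z n\<bar> \<le> (2 * B0) * fact n * real n powr (z - 1)"
      using npos by (simp add: mult_le_cancel_right)
  qed
  then show ?thesis by blast
qed

lemma pochhammer_eventually_ge:
  fixes z :: real
  assumes z: "z > 0"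
  shows "\<exists>b>0. \<exists>N. \<forall>n\<ge>N. pochhammer z n \<ge> b * fact n * real n powr (z - 1)"
proof -
  have r: "rGamma z > 0" using z by (simp add: rGamma_inverse_Gamma)
  have "eventually (\<lambda>n. rGamma_series z n > rGamma z / 2) sequentially"
    using rGamma_series_LIMSEQ[of z] r by (intro order_tendstoD(1)) auto
  then obtain N0 where N0: "\<And>n. n \<ge> N0 \<Longrightarrow> rGamma_series z n > rGamma z / 2"
    by (auto simp: eventually_sequentially)
  obtain N1 :: nat where N1: "real N1 \<ge> z + 1" using real_arch_simple by blast
  define N where "N = max N0 N1"
  have "\<forall>n\<ge>N. pochhammer z n \<ge> (rGamma z / 4) * fact n * real n powr (z - 1)"
  proof (intro allI impI)
    fix n assume n: "n \<ge> N"
    then have npos: "real n > 0" using N1 z unfolding N_def by linarith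
    have zn: "z + real n \<le> 2 * real n" "z + real n > 0" using n N1 z unfolding N_def by linarith+
    have "rGamma z / 2 * (fact n * real n powr z) < pochhammer z (Suc n)"
      using N0[of n] n npos unfolding N_def by (simp add: rGamma_series_eq field_simps)
    also have "pochhammer z (Suc n) = pochhammer z n * (z + real n)" by (rule pochhammer_Suc)
    also have "\<dots> \<le> pochhammer z n * (2 * real n)"
      using zn z by (intro mult_left_mono) (auto intro!: pochhammer_nonneg)
    finally have "rGamma z / 2 * (fact n * (real n * real n powr (z - 1))) <
        pochhammer z n * (2 * real n)"
      using npos by (simp add: powr_diff)
    then have "(rGamma z / 4 * fact n * real n powr (z - 1)) * real n < pochhammer z n * real n"
      by (simp add: field_simps)
    then show "pochhammer z n \<ge> (rGamma z / 4) * fact n * real n powr (z - 1)"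
      using npos by (simp add: mult_less_cancel_right)
  qed
  then show ?thesis using r by (intro exI[of _ "rGamma z / 4"]) auto
qed

section \<open>The expansion of $I_{\beta+1}$\<close>

lemma
  fixes \<beta> s :: real
  assumes b: "\<beta> > -1" and s: "s > -1"
  shows integrable_I_fun: "integrable lborel (\<lambda>t. indicator {0<..} t * I_fun (\<beta> + 1) t)"
    and laplace_I_fun: "(\<integral>t. indicator {0<..} t * I_fun (\<beta> + 1) t * exp (- (s * t)) \<partial>lborel)
      = (s + 1) powr (- (\<beta> + 1))"
proof -
  have G: "Gamma (\<beta> + 1) > 0" using b by (intro Gamma_real_pos) simp
  have I_eq: "indicator {0<..} t * I_fun (\<beta> + 1) t * exp (- (s * t))
      = indicator {0<..} t * (t powr \<beta> * exp (- ((s + 1) * t))) / Gamma (\<beta> + 1)" for t s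
    by (simp add: I_fun_def exp_add[symmetric] algebra_simps)
  show "integrable lborel (\<lambda>t. indicator {0<..} t * I_fun (\<beta> + 1) t)"
    using integrable_powr_exp_pos[OF b, of 1] I_eq[of _ 0] by simp
  have "(\<integral>t. indicator {0<..} t * I_fun (\<beta> + 1) t * exp (- (s * t)) \<partial>lborel)
      = Gamma (\<beta> + 1) / (s + 1) powr (\<beta> + 1) / Gamma (\<beta> + 1)"
    using integral_powr_exp_pos[OF b, of "s + 1"] s by (simp add: I_eq)
  also have "\<dots> = 1 / (s + 1) powr (\<beta> + 1)"
    using G by simp
  also have "\<dots> = (s + 1) powr (- (\<beta> + 1))"
    by (simp only: powr_minus_divide)
  finally show "(\<integral>t. indicator {0<..} t * I_fun (\<beta> + 1) t * exp (- (s * t)) \<partial>lborel)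
      = (s + 1) powr (- (\<beta> + 1))" .
qed

lemma sums_gbinomial_laplace_ell:
  fixes \<alpha> \<beta> s :: real
  assumes s: "s > 0"
  shows "(\<lambda>n. ((\<alpha> - \<beta> + real n - 1) gchoose n) * ((s + 1) powr (- (\<alpha> + 1)) * (s / (s + 1)) ^ n))
    sums (s + 1) powr (- (\<beta> + 1))"
proof -
  define x where "x = s / (s + 1)"
  have x: "\<bar>x\<bar> < 1" unfolding x_def using s by simp
  have "(\<lambda>n. ((\<beta> - \<alpha>) gchoose n) * (- x) ^ n) sums (1 + (- x)) powr (\<beta> - \<alpha>)"
    by (rule gen_binomial_real) (use x in simp)
  moreover have "((\<beta> - \<alpha>) gchoose n) * (- x) ^ n = ((\<alpha> - \<beta> + real n - 1) gchoose n) * x ^ n" for n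
    using gbinomial_minus[of "\<alpha> - \<beta>" n] by (simp add: power_minus[of x] algebra_simps)
  moreover have "1 - x = 1 / (s + 1)" unfolding x_def using s by (simp add: field_simps)
  moreover have "(1 / (s + 1)) powr (\<beta> - \<alpha>) = (s + 1) powr (\<alpha> - \<beta>)"
    using s by (simp add: powr_divide powr_minus_divide[symmetric])
  ultimately have "(\<lambda>n. ((\<alpha> - \<beta> + real n - 1) gchoose n) * x ^ n) sums (s + 1) powr (\<alpha> - \<beta>)"
    by simp
  then have "(\<lambda>n. (s + 1) powr (- (\<alpha> + 1)) * (((\<alpha> - \<beta> + real n - 1) gchoose n) * x ^ n))
      sums ((s + 1) powr (- (\<alpha> + 1)) * (s + 1) powr (\<alpha> - \<beta>))"
    by (rule sums_mult)
  moreover have "(s + 1) powr (- (\<alpha> + 1)) * (s + 1) powr (\<alpha> - \<beta>) = (s + 1) powr (- (\<beta> + 1))"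
    using powr_add[of "s + 1" "- (\<alpha> + 1)" "\<alpha> - \<beta>"] by (simp add: algebra_simps)
  ultimately show ?thesis by (simp add: x_def mult_ac)
qed

lemma abs_gbinomial_eventually_le:
  fixes \<gamma> :: real
  shows "\<exists>B N. \<forall>n\<ge>N. \<bar>(\<gamma> + real n - 1) gchoose n\<bar> \<le> B * real n powr (\<gamma> - 1)"
proof -
  obtain B N where B: "\<And>n. n \<ge> N \<Longrightarrow> \<bar>pochhammer \<gamma> n\<bar> \<le> B * fact n * real n powr (\<gamma> - 1)"
    using abs_pochhammer_eventually_le[of \<gamma>] by blast
  have "\<bar>(\<gamma> + real n - 1) gchoose n\<bar> \<le> B * real n powr (\<gamma> - 1)" if "n \<ge> N" for n
  proof -
    have "\<bar>(\<gamma> + real n - 1) gchoose n\<bar> = \<bar>pochhammer \<gamma> n\<bar> / fact n"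
      by (subst gbinomial_pochhammer') (simp add: algebra_simps abs_divide)
    also have "\<dots> \<le> B * fact n * real n powr (\<gamma> - 1) / fact n"
      by (intro divide_right_mono B that) simp
    finally show ?thesis by simp
  qed
  then show ?thesis by blast
qed

lemma L1_norm_ell_eventually_le:
  fixes \<alpha> :: real
  assumes a: "\<alpha> > -1"
  shows "\<exists>C N. \<forall>n\<ge>N. (\<integral>t. \<bar>indicator {0<..} t * ell n \<alpha> t\<bar> \<partial>lborel) \<le> C * real n powr (- \<alpha> / 2)"
proof -
  obtain b N where b: "b > 0"
    and poch: "\<And>n. n \<ge> N \<Longrightarrow> pochhammer (\<alpha> + 1) n \<ge> b * fact n * real n powr (\<alpha> + 1 - 1)"
    using pochhammer_eventually_ge[of "\<alpha> + 1"] a by auto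
  have Ga: "Gamma (\<alpha> + 1) > 0" using a by (intro Gamma_real_pos) simp
  have "(\<integral>t. \<bar>indicator {0<..} t * ell n \<alpha> t\<bar> \<partial>lborel) \<le> 1 / sqrt b * real n powr (- \<alpha> / 2)"
    if n: "n \<ge> max N 1" for n
  proof -
    have npos: "real n > 0" using n by simp
    have "\<alpha> + 1 \<notin> \<int>\<^sub>\<le>\<^sub>0" using a by (auto elim!: nonpos_Ints_cases)
    then have "Gamma (real n + \<alpha> + 1) = Gamma (\<alpha> + 1) * pochhammer (\<alpha> + 1) n"
      using pochhammer_Gamma[of "\<alpha> + 1" n] Ga by (simp add: field_simps add_ac)
    then have "Gamma (\<alpha> + 1) * (fact n / Gamma (real n + \<alpha> + 1)) = fact n / pochhammer (\<alpha> + 1) n"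
      using Ga by simp
    also have "\<dots> \<le> fact n / (b * fact n * real n powr \<alpha>)"
    proof (rule divide_left_mono)
      have "b * fact n * real n powr \<alpha> > 0" using b npos by simp
      moreover have "b * fact n * real n powr \<alpha> \<le> pochhammer (\<alpha> + 1) n" using poch[of n] n by simp
      ultimately show "b * fact n * real n powr \<alpha> \<le> pochhammer (\<alpha> + 1) n"
        and "0 < pochhammer (\<alpha> + 1) n * (b * fact n * real n powr \<alpha>)"
        by simp_all
    qed simp
    also have "\<dots> = real n powr (- \<alpha>) / b"
      using npos b by (simp add: powr_minus field_simps)
    finally have "sqrt (Gamma (\<alpha> + 1) * (fact n / Gamma (real n + \<alpha> + 1)))
        \<le> sqrt (real n powr (- \<alpha>) / b)"
      by (rule real_sqrt_le_mono)
    also have "\<dots> = 1 / sqrt b * real n powr (- \<alpha> / 2)"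
      using npos by (simp add: real_sqrt_divide powr_half_sqrt_powr[symmetric])
    finally show ?thesis by (rule order_trans[OF L1_norm_ell_le[OF a]])
  qed
  then show ?thesis by blast
qed

lemma summable_L1_norm_gbinomial_ell:
  fixes \<alpha> \<beta> :: real
  assumes a: "\<alpha> > -1" and ab: "2 * \<beta> > \<alpha>"
  shows "summable (\<lambda>n. \<integral>t. \<bar>indicator {0<..} t * (((\<alpha> - \<beta> + real n - 1) gchoose
      n) * ell n \<alpha> t)\<bar> \<partial>lborel)"
proof -
  obtain B N1 where B: "\<And>n. n \<ge> N1 \<Longrightarrow> \<bar>(\<alpha> - \<beta> + real n - 1) gchoose n\<bar> \<le> B * real n powr (\<alpha> - \<beta> - 1)"
    using abs_gbinomial_eventually_le[of "\<alpha> - \<beta>"] by auto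
  obtain C N2 where C: "\<And>n. n \<ge> N2 \<Longrightarrow> (\<integral>t. \<bar>indicator {0<..} t * ell n \<alpha> t\<bar> \<partial>lborel) \<le> C
      * real n powr (- \<alpha> / 2)"
    using L1_norm_ell_eventually_le[OF a] by auto
  have "summable (\<lambda>n. B * C * real n powr (\<alpha> - \<beta> - 1 - \<alpha> / 2))"
    using ab by (intro summable_mult) (simp add: summable_real_powr_iff)
  then show ?thesis
  proof (rule summable_comparison_test')
    fix n assume n: "n \<ge> max (max N1 N2) 1"
    have "(\<integral>t. \<bar>indicator {0<..} t * (((\<alpha> - \<beta> + real n - 1) gchoose n) * ell n \<alpha> t)\<bar> \<partial>lborel)
        = (\<integral>t. \<bar>(\<alpha> - \<beta> + real n - 1) gchoose n\<bar> * \<bar>indicator {0<..} t * ell n \<alpha> t\<bar> \<partial>lborel)"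
      by (intro Bochner_Integration.integral_cong) (simp_all add: abs_mult)
    also have "\<dots> = \<bar>(\<alpha> - \<beta> + real n - 1) gchoose n\<bar> *
        (\<integral>t. \<bar>indicator {0<..} t * ell n \<alpha> t\<bar> \<partial>lborel)"
      by simp
    also have "\<dots> \<le> B * real n powr (\<alpha> - \<beta> - 1) * (C * real n powr (- \<alpha> / 2))"
      using B[of n] C[of n] n by (intro mult_mono) auto
    also have "\<dots> = B * C * real n powr (\<alpha> - \<beta> - 1 - \<alpha> / 2)"
      using n by (simp add: powr_add[symmetric])
    finally show "norm (\<integral>t. \<bar>indicator {0<..} t * (((\<alpha> - \<beta> + real n - 1) gchoose
        n) * ell n \<alpha> t)\<bar> \<partial>lborel)
        \<le> B * C * real n powr (\<alpha> - \<beta> - 1 - \<alpha> / 2)"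
      by simp
  qed
qed

lemma L1_sums_gbinomial_ell:
  fixes \<alpha> \<beta> :: real
  assumes a: "\<alpha> > -1" and ab: "2 * \<beta> > \<alpha>"
  shows "L1_sums (\<lambda>n t. ((\<alpha> - \<beta> + real n - 1) gchoose n) * ell n \<alpha> t) (I_fun (\<beta> + 1))"
proof (rule L1_sums_if_laplace_sums)
  have b: "\<beta> > -1" using a ab by linarith
  show "integrable lborel (\<lambda>t. indicator {0<..} t * (((\<alpha> - \<beta> + real n - 1) gchoose n) * ell n \<alpha> t))"
    for n by (rule integrable_ell[OF a])
  show "integrable lborel (\<lambda>t. indicator {0<..} t * I_fun (\<beta> + 1) t)"
    by (rule integrable_I_fun[OF b, of 0]) simp
  show "summable (\<lambda>n. \<integral>t. \<bar>indicator {0<..} t * (((\<alpha> - \<beta> + real n - 1) gchoose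
      n) * ell n \<alpha> t)\<bar> \<partial>lborel)"
    by (rule summable_L1_norm_gbinomial_ell[OF a ab])
  fix k :: nat
  show "(\<lambda>n. \<integral>t. indicator {0<..} t * (((\<alpha> - \<beta> + real n - 1) gchoose n) * ell n \<alpha> t)
      * exp (- ((real k + 1) * t)) \<partial>lborel)
      sums (\<integral>t. indicator {0<..} t * I_fun (\<beta> + 1) t * exp (- ((real k + 1) * t)) \<partial>lborel)"
    unfolding laplace_ell[OF a, where s = "real k + 1", simplified]
      laplace_I_fun[OF b, where s = "real k + 1", simplified]
    using sums_gbinomial_laplace_ell[of "real k + 1" \<alpha> \<beta>] by (simp add: mult.assoc)
qed

section \<open>The expansion of $e_a$\<close>

lemma nn_integral_inverse_one_plus_sq:
  "(\<integral>\<^sup>+t. ennreal ((indicator {0<..} t * (1 / (1 + t)))^2) \<partial>lborel) \<le> ennreal 1"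
proof -
  have "(\<integral>\<^sup>+t. ennreal ((indicator {0<..} t * (1 / (1 + t)))^2) \<partial>lborel)
      \<le> (\<integral>\<^sup>+t. ennreal (1 / (1 + t)^2) * indicator {0..} t \<partial>lborel)"
    by (intro nn_integral_mono) (auto simp: indicator_def power_divide)
  also have "\<dots> = ennreal (0 - (-1 / (1 + 0)))"
  proof (rule nn_integral_FTC_atLeast)
    show "(\<lambda>x::real. 1 / (1 + x)^2) \<in> borel_measurable borel"
      using borel_measurable_divide[of "\<lambda>x::real. 1" borel "\<lambda>x. (1+x)^2"] by auto
    show "DERIV (\<lambda>x. -1 / (1 + x)) x :> 1 / (1 + x)^2" if "0 \<le> x" for x :: real
      using that by (auto intro!: derivative_eq_intros simp: power2_eq_square)
    show "0 \<le> 1 / (1 + x)^2" for x :: real by simp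
    show "((\<lambda>x::real. -1 / (1 + x)) \<longlongrightarrow> 0) at_top"
      by (rule tendsto_divide_0[OF tendsto_const], rule filterlim_at_top_imp_at_infinity,
          rule filterlim_tendsto_add_at_top[OF tendsto_const filterlim_ident])
  qed
  finally show ?thesis by simp
qed

lemma laguerre_0_sq_le:
  "(laguerre n 0 t)^2 \<le> 6 * ((laguerre n 2 t)^2 + (laguerre (n-1) 2 t)^2 + (laguerre (n-2) 2 t)^2)"
proof -
  define y where "y = (if n = 0 then 0 else laguerre (n - 1) 2 t)"
  define z where "z = (if n < 2 then 0 else laguerre (n - 2) 2 t)"
  have shift0: "laguerre m 0 t = laguerre m 1 t - (if m = 0 then 0 else laguerre (m - 1) 1 t)" for m
    using laguerre_eq_diff_param[of m 0 t] by simp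
  have shift1: "laguerre m 1 t = laguerre m 2 t - (if m = 0 then 0 else laguerre (m - 1) 2 t)" for m
    using laguerre_eq_diff_param[of m 1 t] by simp
  have "laguerre n 0 t = laguerre n 2 t - 2 * y + z"
  proof -
    consider "n = 0" | "n = 1" | "n \<ge> 2" by linarith
    then show ?thesis
      by cases (use shift0[of n] shift1[of n] shift1[of "n - 1"] in
                \<open>simp_all add: y_def z_def diff_diff_eq numeral_2_eq_2\<close>)
  qed
  moreover have "(x - 2 * y + z)^2 \<le> 6 * (x^2 + y^2 + z^2)" for x y z :: real
  proof -
    have "0 \<le> (2*x + y)^2 + (2*z + y)^2 + (x - z)^2" by simp
    then show ?thesis by (simp add: power2_eq_square algebra_simps)
  qed
  moreover have "y^2 \<le> (laguerre (n-1) 2 t)^2" "z^2 \<le> (laguerre (n-2) 2 t)^2"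
    by (simp_all add: y_def z_def)
  ultimately show ?thesis by (smt (verit))
qed

lemma Gamma_plus_3_div_fact: "Gamma (real j + 2 + 1) / fact j = (real j + 1) * (real j + 2)"
proof -
  have "Gamma (real j + 2 + 1) = fact (j + 2)"
    using Gamma_fact[of "j+2"] by (simp add: add_ac)
  also have "fact (j + 2) = (real j + 2) * (real j + 1) * (fact j :: real)"
    by (simp add: fact_Suc algebra_simps numeral_2_eq_2)
  finally show ?thesis by simp
qed

lemma laguerre_fun_eq_ell: "t > 0 \<Longrightarrow> laguerre_fun n t = ell n 0 t * exp (t / 2)"
proof -
  assume t: "t > 0"
  have "Gamma (real n + 0 + 1) = fact n" using Gamma_fact[of n, where 'a=real] by (simp add: add_ac)
  then have "ell n 0 t = exp (-t) * laguerre n 0 t" using t by (simp add: ell_def)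
  moreover have "exp (-t) * exp (t / 2) = exp (-t / 2)" by (simp add: exp_add[symmetric])
  ultimately show ?thesis by (simp add: laguerre_fun_def mult_ac)
qed

lemma laguerre_fun_mult_exp:
  "indicator {0<..} t * (c * laguerre_fun n t) * exp (-(s * t))
   = indicator {0<..} t * (c * ell n 0 t) * exp (-((s - 1/2) * t))"
proof (cases "t > 0")
  case True
  have "exp (t / 2) * exp (-(s * t)) = exp (-((s - 1/2) * t))" by (simp add:
      exp_add[symmetric] algebra_simps)
  then show ?thesis using True by (simp add: laguerre_fun_eq_ell mult_ac)
qed simp

lemma integrable_laguerre_fun_mult_exp:
  assumes s: "s > -1/2"
  shows "integrable lborel (\<lambda>t. indicator {0<..} t * (c * laguerre_fun n t) * exp (- (s * t)))"
proof -
  have zero: "(0::real) > -1" by simp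
  show ?thesis
    unfolding laguerre_fun_mult_exp ell_mult_exp_eq_sum[OF zero]
    by (rule integrable_sum_powr_exp_pos) (use s in auto)
qed

lemma laplace_laguerre_fun:
  assumes s: "s > -1/2"
  shows "(\<integral>t. indicator {0<..} t * (c * laguerre_fun n t) * exp (-(s * t)) \<partial>lborel)
       = c / (s + 1/2) * ((s - 1/2) / (s + 1/2)) ^ n"
proof -
  have "(\<integral>t. indicator {0<..} t * (c * laguerre_fun n t) * exp (-(s * t)) \<partial>lborel)
      = (\<integral>t. indicator {0<..} t * (c * ell n 0 t) * exp (-((s - 1/2) * t)) \<partial>lborel)"
    by (simp only: laguerre_fun_mult_exp)
  also have "\<dots> = c * ((s - 1/2) + 1) powr (-(0 + 1)) * ((s - 1/2) / ((s - 1/2) + 1)) ^ n"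
    by (rule laplace_ell) (use s in auto)
  also have "\<dots> = c / (s + 1/2) * ((s - 1/2) / (s + 1/2)) ^ n"
  proof -
    have h1: "s - 1/2 + 1 = s + 1/2" by simp
    have h2: "(s + 1/2) powr (-(0+1)) = 1 / (s + 1/2)"
      using s by (simp add: powr_minus_divide)
    show ?thesis unfolding h1 by (subst h2) auto
  qed
  finally show ?thesis .
qed

lemma laguerre_0_weighted_sq_le:
  "(indicator {0<..} t * (exp (-t/2) * (1 + t) * laguerre n 0 t))^2 \<le>
    2 * (indicator {0<..} t * (t powr 0 * exp (-t) * laguerre n 0 t ^ 2)) +
    12 * (indicator {0<..} t * (t powr 2 * exp (-t) * laguerre n 2 t ^ 2) +
          indicator {0<..} t * (t powr 2 * exp (-t) * laguerre (n-1) 2 t ^ 2) +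
          indicator {0<..} t * (t powr 2 * exp (-t) * laguerre (n-2) 2 t ^ 2))"
proof (cases "t > 0")
  case True
  define L where "L = laguerre n 0 t"
  define Lsq where "Lsq = (laguerre n 2 t)^2 + (laguerre (n-1) 2 t)^2 + (laguerre (n-2) 2 t)^2"
  define E where "E = exp (-t)"
  have E0: "E > 0" unfolding E_def by simp
  have e: "exp (-(t/2))^2 = E"
    unfolding E_def by (simp add: power2_eq_square exp_add[symmetric])
  have "(indicator {0<..} t * (exp (-t/2) * (1 + t) * laguerre n 0 t))^2 = E * ((1 + t)^2 * L^2)"
    using True unfolding L_def by (simp add: power_mult_distrib e)
  also have "\<dots> \<le> E * ((2 + 2 * t^2) * L^2)"
  proof -
    have "(1 + t)^2 \<le> 2 + 2 * t^2"
      using sum_squares_ge_zero[of "1 - t" 0] by (simp add: power2_eq_square algebra_simps)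
    then show ?thesis using E0 by (intro mult_left_mono mult_right_mono) auto
  qed
  also have "\<dots> = 2 * (E * L^2) + 2 * (t^2 * E * L^2)"
    by (simp add: algebra_simps)
  also have "\<dots> \<le> 2 * (E * L^2) + 2 * (t^2 * E * (6 * Lsq))"
    unfolding L_def Lsq_def using E0 by (intro add_left_mono mult_left_mono laguerre_0_sq_le) auto
  also have "\<dots> = 2 * (E * L^2) + 12 * (t^2 * E * laguerre n 2 t ^ 2 + t^2 * E * laguerre (n-1) 2 t ^
      2 + t^2 * E * laguerre (n-2) 2 t ^ 2)"
    unfolding Lsq_def by (simp add: algebra_simps)
  finally show ?thesis using True unfolding L_def E_def by (simp add: powr_realpow)
qed simp

(* The weight (1 + t)^2 is paired with 1/(1 + t) by Cauchy-Schwarz below; the part t^2 L_n^(0)(t)^2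
  is controlled through the orthogonality norms of L_j^(2), j = n-2, n-1, n. *)
lemma nn_integral_laguerre_0_weighted_sq_le:
  "(\<integral>\<^sup>+t. ennreal ((indicator {0<..} t * (exp (- t / 2) * (1 + t) * laguerre n 0 t))^2) \<partial>lborel)
    \<le> ennreal (38 * (real n + 2)^2)"
proof -
  define Q where "Q \<alpha> j t = indicator {0<..} t * (t powr \<alpha> * exp (- t) * laguerre j \<alpha> t ^ 2)"
    for \<alpha> j t
  define R where "R t = 2 * Q 0 n t + 12 * (Q 2 n t + Q 2 (n - 1) t + Q 2 (n - 2) t)" for t
  have iQ: "integrable lborel (Q \<alpha> j)" if "\<alpha> > -1" for \<alpha> j
    unfolding Q_def using integrable_laguerre_sq[OF that] by simp
  have Q0: "(\<integral>t. Q 0 n t \<partial>lborel) = 1"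
    using integral_laguerre_sq[of 0 n] Gamma_fact[of n, where 'a = real] unfolding Q_def
    by (simp add: add_ac)
  have Q2: "(\<integral>t. Q 2 j t \<partial>lborel) \<le> (real n + 2)^2" if "j \<le> n" for j
  proof -
    have "(\<integral>t. Q 2 j t \<partial>lborel) = (real j + 1) * (real j + 2)"
      using integral_laguerre_sq[of 2 j] Gamma_plus_3_div_fact[of j] unfolding Q_def by simp
    also have "\<dots> \<le> (real n + 2) * (real n + 2)"
      using that by (intro mult_mono) auto
    finally show ?thesis by (simp add: power2_eq_square)
  qed
  have "(\<integral>t. R t \<partial>lborel)
      = 2 * (\<integral>t. Q 0 n t \<partial>lborel) + 12 * ((\<integral>t. Q 2 n t \<partial>lborel)
        + (\<integral>t. Q 2 (n - 1) t \<partial>lborel) + (\<integral>t. Q 2 (n - 2) t \<partial>lborel))"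
    unfolding R_def using iQ by simp
  also have "\<dots> \<le> 38 * (real n + 2)^2"
  proof -
    have le: "n - 1 \<le> n" "n - 2 \<le> n" "(1::real) \<le> (real n + 2)^2"
      by (simp_all add: one_le_power)
    show ?thesis
      unfolding distrib_left using Q0 Q2[OF order_refl] Q2[OF le(1)] Q2[OF le(2)] le(3) by linarith
  qed
  finally have R: "(\<integral>t. R t \<partial>lborel) \<le> 38 * (real n + 2)^2" .
  have "(\<integral>\<^sup>+t. ennreal ((indicator {0<..} t * (exp (- t / 2) * (1 + t) *
      laguerre n 0 t))^2) \<partial>lborel)
      \<le> (\<integral>\<^sup>+t. ennreal (R t) \<partial>lborel)"
    by (intro nn_integral_mono ennreal_leI) (simp only: R_def Q_def laguerre_0_weighted_sq_le)
  also have "\<dots> = ennreal (\<integral>t. R t \<partial>lborel)"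
  proof (rule nn_integral_eq_integral)
    show "integrable lborel R" unfolding R_def using iQ by simp
    show "AE t in lborel. 0 \<le> R t" unfolding R_def Q_def by simp
  qed
  also have "\<dots> \<le> ennreal (38 * (real n + 2)^2)"
    using R by (rule ennreal_leI)
  finally show ?thesis .
qed

lemma L1_norm_laguerre_fun_le:
  "(\<integral>t. \<bar>indicator {0<..} t * laguerre_fun n t\<bar> \<partial>lborel) \<le> sqrt 38 * (real n + 2)"
proof -
  let ?u = "\<lambda>t. indicator {0<..} t * (exp (- t / 2) * (1 + t) * laguerre n 0 t)"
  let ?v = "\<lambda>t::real. indicator {0<..} t * (1 / (1 + t))"
  have "(\<integral>t. \<bar>indicator {0<..} t * laguerre_fun n t\<bar> \<partial>lborel) \<le> sqrt (38 * (real n + 2)^2 * 1)"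
  proof (rule L1_norm_le_Cauchy_Schwarz)
    show "integrable lborel (\<lambda>t. indicator {0<..} t * laguerre_fun n t)"
      using integrable_laguerre_fun_mult_exp[of 0 1 n] by simp
    show "?u \<in> borel_measurable borel" unfolding laguerre_def by measurable
    have [measurable]: "(\<lambda>x::real. 1 / (1 + x)) \<in> borel_measurable borel"
      using borel_measurable_divide[of "\<lambda>x::real. 1" borel "\<lambda>x. 1 + x"] by auto
    show "?v \<in> borel_measurable borel" by measurable
    show "\<bar>indicator {0<..} t * laguerre_fun n t\<bar> = \<bar>?u t\<bar> * \<bar>?v t\<bar>" for t
    proof (cases "t > 0")
      case True
      then have "?u t * ?v t = exp (- t / 2) * laguerre n 0 t" by (simp add: field_simps)
      then have "\<bar>?u t\<bar> * \<bar>?v t\<bar> = \<bar>exp (- t / 2) * laguerre n 0 t\<bar>"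
        by (simp only: abs_mult[symmetric])
      then show ?thesis using True by (simp add: laguerre_fun_def)
    qed simp
    show "(\<integral>\<^sup>+t. ennreal ((?v t)^2) \<partial>lborel) \<le> ennreal 1"
      by (rule nn_integral_inverse_one_plus_sq)
    show "(\<integral>\<^sup>+t. ennreal ((?u t)^2) \<partial>lborel) \<le> ennreal (38 * (real n + 2)^2)"
      by (rule nn_integral_laguerre_0_weighted_sq_le)
  qed simp_all
  also have "\<dots> = sqrt 38 * (real n + 2)" by (simp add: real_sqrt_mult)
  finally show ?thesis .
qed

lemma summable_power_mult_linear:
  fixes r :: real
  assumes r: "0 \<le> r" "r < 1"
  shows "summable (\<lambda>n. r ^ n * (real n + 2))"
proof (rule summable_ratio_test[where c = "(1 + r) / 2" and N = "nat \<lceil>4 / (1 - r)\<rceil>"])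
  show "(1 + r) / 2 < 1" using r by simp
  fix n assume n: "n \<ge> nat \<lceil>4 / (1 - r)\<rceil>"
  then have "real n \<ge> 4 / (1 - r)" by linarith
  then have "real n * (1 - r) \<ge> 4" using r by (simp add: field_simps)
  then have key: "r * (real n + 3) \<le> (1 + r) / 2 * (real n + 2)"
    using r by (simp add: field_simps)
  have "r ^ Suc n * (real (Suc n) + 2) = r ^ n * (r * (real n + 3))" by (simp add: algebra_simps)
  also have "\<dots> \<le> r ^ n * ((1 + r) / 2 * (real n + 2))"
    using key r by (intro mult_left_mono) auto
  finally have F: "r ^ Suc n * (real (Suc n) + 2) \<le> (1 + r) / 2 * (r ^ n * (real n + 2))"
    by (simp add: mult_ac)
  have n1: "norm (r ^ Suc n * (real (Suc n) + 2)) = r ^ Suc n * (real (Suc n) + 2)" using r by simp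
  have n2: "norm (r ^ n * (real n + 2)) = r ^ n * (real n + 2)" using r by simp
  show "norm (r ^ Suc n * (real (Suc n) + 2)) \<le> (1 + r) / 2 * norm (r ^ n * (real n + 2))"
    unfolding n1 n2 by (rule F)
qed

lemma integrable_exp_pos:
  fixes a :: real
  assumes a: "a > 0"
  shows "integrable lborel (\<lambda>t. indicator {0<..} t * exp (- a * t))"
proof -
  have "integrable lborel (\<lambda>t. indicator {0<..} t * (t powr 0 * exp (- (a * t))))"
    using a by (intro integrable_powr_exp_pos) auto
  moreover have "(\<lambda>t. indicator {0<..} t * (t powr 0 * exp (- (a * t))))
      = (\<lambda>t::real. indicator {0<..} t * exp (- a * t))"
    by (rule ext) (simp add: indicator_def)
  ultimately show ?thesis by simp
qed

lemma laplace_exp: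
  fixes a s :: real
  assumes as: "a + s > 0"
  shows "(\<integral>t. indicator {0<..} t * exp (- a * t) * exp (- (s * t)) \<partial>lborel) = 1 / (a + s)"
proof -
  have "(\<lambda>t. indicator {0<..} t * exp (- a * t) * exp (- (s * t)))
      = (\<lambda>t::real. indicator {0<..} t * (t powr 0 * exp (- ((a + s) * t))))"
    by (rule ext) (simp add: indicator_def exp_add[symmetric] algebra_simps)
  then have "(\<integral>t. indicator {0<..} t * exp (- a * t) * exp (- (s * t)) \<partial>lborel)
      = Gamma (0 + 1) / (a + s) powr (0 + 1)"
    using integral_powr_exp_pos[of 0 "a + s"] as by (simp only:)
  then show ?thesis using as by simp
qed

lemma sums_geometric_laplace_laguerre_fun:
  fixes a s :: real
  assumes a: "a > 0" and s: "s > 0"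
  shows "(\<lambda>n. (a - 1/2) ^ n / (a + 1/2) ^ (n + 1) / (s + 1/2) * ((s - 1/2) / (s + 1/2)) ^ n)
    sums (1 / (a + s))"
proof -
  define p q where "p = (a - 1/2) / (a + 1/2)" and "q = (s - 1/2) / (s + 1/2)"
  have p: "\<bar>p\<bar> < 1" and q: "\<bar>q\<bar> < 1"
    unfolding p_def q_def using a s by (simp_all add: abs_less_iff field_simps)
  have "\<bar>p * q\<bar> \<le> 1 * \<bar>q\<bar>"
    unfolding abs_mult using p by (intro mult_right_mono) auto
  then have "\<bar>p * q\<bar> < 1" using q by linarith
  then have "(\<lambda>n. (p * q) ^ n / ((a + 1/2) * (s + 1/2)))
      sums (1 / (1 - p * q) / ((a + 1/2) * (s + 1/2)))"
    by (intro sums_divide geometric_sums) simp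
  moreover have "(p * q) ^ n / ((a + 1/2) * (s + 1/2))
      = (a - 1/2) ^ n / (a + 1/2) ^ (n + 1) / (s + 1/2) * ((s - 1/2) / (s + 1/2)) ^ n" for n
    unfolding p_def q_def power_mult_distrib power_divide by simp
  moreover have "(1 - p * q) * ((a + 1/2) * (s + 1/2)) = a + s"
  proof -
    have cancel: "(1 - Y / X) * X = X - Y" if "X \<noteq> 0" for X Y :: real
      using that by (simp add: field_simps)
    have "p * q = (a - 1/2) * (s - 1/2) / ((a + 1/2) * (s + 1/2))"
      unfolding p_def q_def by simp
    then have "(1 - p * q) * ((a + 1/2) * (s + 1/2))
        = (a + 1/2) * (s + 1/2) - (a - 1/2) * (s - 1/2)"
      using a s by (simp only:) (rule cancel, simp)
    also have "\<dots> = a + s" by (simp add: algebra_simps)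
    finally show ?thesis .
  qed
  ultimately show ?thesis
    by simp
qed

lemma summable_L1_norm_laguerre_fun_coeffs:
  fixes a :: real
  assumes a: "a > 0"
  shows "summable (\<lambda>n. \<integral>t. \<bar>indicator {0<..} t * ((a - 1/2) ^ n / (a + 1/2) ^ (n + 1) *
      laguerre_fun n t)\<bar> \<partial>lborel)"
proof -
  define z where "z = \<bar>a - 1/2\<bar> / (a + 1/2)"
  have z: "0 \<le> z" "z < 1" unfolding z_def using a by (auto simp: abs_less_iff field_simps)
  have "summable (\<lambda>n. sqrt 38 / (a + 1/2) * (z ^ n * (real n + 2)))"
    by (intro summable_mult summable_power_mult_linear z)
  then show ?thesis
  proof (rule summable_comparison_test')
    fix n :: nat
    have "(\<integral>t. \<bar>indicator {0<..} t * ((a - 1/2) ^ n / (a + 1/2) ^ (n + 1) *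
        laguerre_fun n t)\<bar> \<partial>lborel)
        = (\<integral>t. z ^ n / (a + 1/2) * \<bar>indicator {0<..} t * laguerre_fun n t\<bar> \<partial>lborel)"
      using a by (intro Bochner_Integration.integral_cong)
        (simp_all add: z_def abs_mult power_abs power_divide mult_ac)
    also have "\<dots> = z ^ n / (a + 1/2) * (\<integral>t. \<bar>indicator {0<..} t * laguerre_fun n t\<bar> \<partial>lborel)"
      by simp
    also have "\<dots> \<le> z ^ n / (a + 1/2) * (sqrt 38 * (real n + 2))"
      using a z by (intro mult_left_mono L1_norm_laguerre_fun_le) auto
    finally show "norm (\<integral>t. \<bar>indicator {0<..} t * ((a - 1/2) ^ n / (a + 1/2) ^ (n + 1) *
        laguerre_fun n t)\<bar> \<partial>lborel)
        \<le> sqrt 38 / (a + 1/2) * (z ^ n * (real n + 2))"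
      by (simp add: mult_ac)
  qed
qed

lemma L1_sums_laguerre_fun_exp:
  fixes a :: real
  assumes a: "a > 0"
  shows "L1_sums (\<lambda>n t. (a - 1/2) ^ n / (a + 1/2) ^ (n + 1) * laguerre_fun n t) (\<lambda>t. exp (- a * t))"
proof (rule L1_sums_if_laplace_sums)
  show "integrable lborel (\<lambda>t. indicator {0<..} t *
      ((a - 1/2) ^ n / (a + 1/2) ^ (n + 1) * laguerre_fun n t))"
    for n
    using integrable_laguerre_fun_mult_exp[of 0 "(a - 1/2) ^ n / (a + 1/2) ^ (n + 1)" n] by simp
  show "integrable lborel (\<lambda>t. indicator {0<..} t * exp (- a * t))"
    by (rule integrable_exp_pos[OF a])
  show "summable (\<lambda>n. \<integral>t. \<bar>indicator {0<..} t * ((a - 1/2) ^ n / (a + 1/2) ^ (n + 1) *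
      laguerre_fun n t)\<bar> \<partial>lborel)"
    by (rule summable_L1_norm_laguerre_fun_coeffs[OF a])
  fix k :: nat
  have s: "real k + 1 > - 1/2" and as: "a + (real k + 1) > 0" using a by simp_all
  show "(\<lambda>n. \<integral>t. indicator {0<..} t * ((a - 1/2) ^ n / (a + 1/2) ^ (n + 1) * laguerre_fun n t)
      * exp (- ((real k + 1) * t)) \<partial>lborel)
      sums (\<integral>t. indicator {0<..} t * exp (- a * t) * exp (- ((real k + 1) * t)) \<partial>lborel)"
    unfolding laplace_laguerre_fun[OF s] laplace_exp[OF as]
    by (rule sums_geometric_laplace_laguerre_fun[OF a]) simp
qed

theorem theorem3p2:
  shows "(\<forall>\<alpha> \<beta>::real. \<alpha> > -1 \<and> 2 * \<beta> > \<alpha> \<longrightarrow>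
            L1_sums (\<lambda>n t. ((\<alpha> - \<beta> + real n - 1) gchoose n) * ell n \<alpha> t) (I_fun (\<beta> + 1)))
       \<and> (\<forall>\<alpha>::real. \<alpha> > 2 \<longrightarrow> L1_sums (\<lambda>n t. ell n \<alpha> t) (I_fun \<alpha>))
       \<and> (\<forall>a::real. a > 0 \<longrightarrow>
            L1_sums (\<lambda>n t. (a - 1/2) ^ n / (a + 1/2) ^ (n + 1) * laguerre_fun n t)
                    (\<lambda>t. exp (- a * t)))"
proof (intro conjI allI impI)
  fix \<alpha> \<beta> :: real
  assume "\<alpha> > -1 \<and> 2 * \<beta> > \<alpha>"
  then show "L1_sums (\<lambda>n t. ((\<alpha> - \<beta> + real n - 1) gchoose n) * ell n \<alpha> t)
      (I_fun (\<beta> + 1))"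
    by (intro L1_sums_gbinomial_ell) auto
next
  fix \<alpha> :: real
  assume "\<alpha> > 2"
  then have "L1_sums (\<lambda>n t. ((\<alpha> - (\<alpha> - 1) + real n - 1) gchoose n) * ell n \<alpha> t)
      (I_fun (\<alpha> - 1 + 1))"
    by (intro L1_sums_gbinomial_ell) auto
  then show "L1_sums (\<lambda>n t. ell n \<alpha> t) (I_fun \<alpha>)"
    by (simp add: binomial_gbinomial[symmetric])
next
  fix a :: real
  assume "a > 0"
  then show "L1_sums (\<lambda>n t. (a - 1/2) ^ n / (a + 1/2) ^ (n + 1) * laguerre_fun n t)
      (\<lambda>t. exp (- a * t))"
    by (rule L1_sums_laguerre_fun_exp)
qed

end
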